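(* Let $G$ be a commutative group, $d\ge 0$, and let $U\subset G$ be a $d$-dimensional quasicube. Then for every $V\subset U$ we have \[ \beta(V)=|V| \quad\text{and}\quad \alpha(V)\ge |V|^{1/2}. \] In particular $\beta(U)=2^d$ and $\alpha(U)\ge 2^{d/2}$.
   Context: All groups are commutative and written additively; sets $A,B$ below range over nonempty finite subsets of $G$. For a finite $U\subset G$: the induced doubling is $\alpha(U)=\inf_{A\supset U,\,B\supset U}\frac{|A+B|}{\sqrt{|A||B|}}$, and the induced tripling is $\beta(U)=\inf_{A,B}\frac{|A+B+U|}{\sqrt{|A||B|}}$ (infimum over all nonempty finite $A,B\subset G$). Quasicubes are defined recursively: a $0$-dimensional quasicube is any singleton; a finite set $U\subset G$ is a $d$-dimensional quasicube ($d\ge1$) if there is a proper subgroup $G'$ of $G$ and two distinct cosets $G'+x$, $G'+y$ such that $U\subset (G'+x)\cup(G'+y)$, both $U\cap(G'+x)$ and $U\cap(G'+y)$ are $(d-1)$-dimensional quasicubes, and $x-y$ has infinite order in the factor group $G/G'$. *)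

theory Defs
  imports Complex_Main
begin

text \<open>The ambient commutative group G is the type 'a of class ab_group_add (G = UNIV).\<close>

definition sumset :: "'a::ab_group_add set \<Rightarrow> 'a set \<Rightarrow> 'a set" where
  "sumset A B = {a + b | a b. a \<in> A \<and> b \<in> B}"

definition subgrp :: "'a::ab_group_add set \<Rightarrow> bool" where
  "subgrp H \<longleftrightarrow> 0 \<in> H \<and> (\<forall>x\<in>H. \<forall>y\<in>H. x + y \<in> H) \<and> (\<forall>x\<in>H. - x \<in> H)"

definition coset :: "'a::ab_group_add set \<Rightarrow> 'a \<Rightarrow> 'a set" where
  "coset H x = {h + x | h. h \<in> H}"

definition infinite_order_mod :: "'a::ab_group_add set \<Rightarrow> 'a \<Rightarrow> bool" where
  "infinite_order_mod H z \<longleftrightarrow> (\<forall>n::nat. n > 0 \<longrightarrow> (\<Sum>i<n. z) \<notin> H)"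

inductive quasicube :: "nat \<Rightarrow> 'a::ab_group_add set \<Rightarrow> bool" where
  qc0: "quasicube 0 {x}"
| qcSuc: "\<lbrakk> finite U; subgrp H; H \<noteq> UNIV; coset H x \<noteq> coset H y;
            U \<subseteq> coset H x \<union> coset H y;
            quasicube d (U \<inter> coset H x); quasicube d (U \<inter> coset H y);
            infinite_order_mod H (x - y) \<rbrakk> \<Longrightarrow> quasicube (Suc d) U"

definition alpha :: "'a::ab_group_add set \<Rightarrow> real" where
  "alpha U = Inf {real (card (sumset A B)) / sqrt (real (card A) * real (card B)) | A B.
                  finite A \<and> finite B \<and> A \<noteq> {} \<and> B \<noteq> {} \<and> U \<subseteq> A \<and> U \<subseteq> B}"

definition beta :: "'a::ab_group_add set \<Rightarrow> real" where
  "beta U = Inf {real (card (sumset (sumset A B) U)) / sqrt (real (card A) * real (card B)) | A B.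
                  finite A \<and> finite B \<and> A \<noteq> {} \<and> B \<noteq> {}}"

end

theory Submission
  imports Defs
begin

text \<open>The heart of the matter is the tripling inequality \<open>|A + B + V| \<ge> |V| sqrt (|A| |B|)\<close> for
  every subset \<open>V\<close> of a quasicube, proved by induction on the dimension. After a translation,
  \<open>V = W\<^sub>0 \<union> W\<^sub>1\<close> with \<open>W\<^sub>0 \<subseteq> H\<close> and \<open>W\<^sub>1 \<subseteq> H + z\<close>, where \<open>z\<close> has infinite order modulo \<open>H\<close>.
  On \<open>H + \<int> z\<close> the coordinate along \<open>z\<close> fibres \<open>A\<close>, \<open>B\<close> and \<open>A + B + V\<close> over \<open>\<int>\<close>, and the
  inequalities for \<open>W\<^sub>0\<close> and \<open>W\<^sub>1\<close> on the fibres combine through a discrete Prekopa-Leindler type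
  inequality: \<open>c\<^sub>0 sqrt (f i g j) \<le> h (i + j)\<close> and \<open>c\<^sub>1 sqrt (f i g j) \<le> h (i + j + 1)\<close> imply
  \<open>(c\<^sub>0 + c\<^sub>1) sqrt (\<Sum>f \<Sum>g) \<le> \<Sum>h\<close>. General \<open>A\<close> and \<open>B\<close> are reduced to \<open>H + \<int> z\<close> by splitting
  them along its cosets. The choice \<open>A = B = {0}\<close> shows that the bound is attained, so
  \<open>\<beta> V = |V|\<close>; and Petridis' lemma turns it into \<open>|A + B|\<^sup>2 \<ge> |V| |A| |B|\<close> for \<open>A, B \<supseteq> V\<close>.\<close>

section \<open>Sumsets\<close>

lemma sumset_iff: "x \<in> sumset A B \<longleftrightarrow> (\<exists>a\<in>A. \<exists>b\<in>B. x = a + b)"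
  unfolding sumset_def by blast

lemma sumset_sumset_iff:
  "x \<in> sumset (sumset A B) C \<longleftrightarrow> (\<exists>a\<in>A. \<exists>b\<in>B. \<exists>c\<in>C. x = a + b + c)"
  unfolding sumset_def by blast

lemma sumsetI: "a \<in> A \<Longrightarrow> b \<in> B \<Longrightarrow> a + b \<in> sumset A B"
  unfolding sumset_def by blast

lemma sumset_mono: "A \<subseteq> A' \<Longrightarrow> B \<subseteq> B' \<Longrightarrow> sumset A B \<subseteq> sumset A' B'"
  unfolding sumset_def by blast

lemma finite_sumset [simp]:
  assumes "finite A" "finite B"
  shows "finite (sumset A B)"
proof -
  have "sumset A B = (\<lambda>(a, b). a + b) ` (A \<times> B)"
    unfolding sumset_def by auto
  then show ?thesis
    using assms by simp
qed

lemma sumset_empty [simp]: "sumset A {} = {}" "sumset {} B = {}"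
  unfolding sumset_def by auto

lemma sumset_commute: "sumset A B = sumset B A"
proof -
  have "sumset A B \<subseteq> sumset B A" for A B :: "'a set"
    unfolding sumset_def using add.commute by blast
  then show ?thesis
    by blast
qed

lemma sumset_singleton: "sumset A {t} = (\<lambda>x. x + t) ` A"
  unfolding sumset_def by auto

lemma sumset_insert: "sumset A (insert c C) = sumset A C \<union> (\<lambda>x. x + c) ` A"
  unfolding sumset_def by auto

lemma sumset_translate: "sumset ((\<lambda>x. x + t) ` A) B = (\<lambda>x. x + t) ` sumset A B"
proof (intro equalityI subsetI)
  fix x assume "x \<in> sumset ((\<lambda>x. x + t) ` A) B"
  then obtain a b where ab: "a \<in> A" "b \<in> B" and "x = (a + t) + b"
    unfolding sumset_def by blast
  then have "x = (a + b) + t"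
    by (simp add: ac_simps)
  with ab show "x \<in> (\<lambda>x. x + t) ` sumset A B"
    by (simp add: sumsetI)
next
  fix x assume "x \<in> (\<lambda>x. x + t) ` sumset A B"
  then obtain a b where ab: "a \<in> A" "b \<in> B" and "x = (a + b) + t"
    unfolding sumset_def by blast
  then have "x = (a + t) + b"
    by (simp add: ac_simps)
  with ab show "x \<in> sumset ((\<lambda>x. x + t) ` A) B"
    by (simp add: sumsetI)
qed

lemma card_translate: "card ((\<lambda>x. x + t) ` A) = card (A :: 'a::ab_group_add set)"
  by (rule card_image) (auto simp: inj_on_def)

lemma sumset_translate_right: "sumset A ((\<lambda>x. x + t) ` B) = (\<lambda>x. x + t) ` sumset A B"
  by (metis sumset_commute sumset_translate)

lemma card_sumset_translate_right: "card (sumset A ((\<lambda>x. x + t) ` B)) = card (sumset A B)"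
  by (simp add: sumset_translate_right card_translate)

lemma card_sumset_sumset_translate:
  "card (sumset (sumset ((\<lambda>x. x + t) ` A) ((\<lambda>x. x + u) ` B)) W) = card (sumset (sumset A B) W)"
  by (simp add: sumset_translate sumset_translate_right sumset_commute[of _ W] card_translate)

lemma card_le_card_sumset:
  assumes "finite A" "finite B" "b \<in> B"
  shows "card A \<le> card (sumset A B)"
proof -
  have "(\<lambda>x. x + b) ` A \<subseteq> sumset A B"
    using assms(3) sumsetI by blast
  then show ?thesis
    using assms by (metis card_mono card_translate finite_sumset)
qed

lemma card_eq_sum_card_fibres:
  assumes "finite X"
  shows "real (card X) = (\<Sum>i\<in>f ` X. real (card {x\<in>X. f x = i}))"
  using sum_fun_comp[OF assms finite_imageI[OF assms] subset_refl, of "\<lambda>_. 1 :: real"]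
  by simp

section \<open>A Prekopa-Leindler type inequality on the integers\<close>

lemma mem_sumset_01:
  fixes I J :: "int set"
  shows "n \<in> sumset (sumset I J) {0, 1} \<longleftrightarrow> (\<exists>i\<in>I. \<exists>j\<in>J. n = i + j \<or> n = i + j + 1)"
  unfolding sumset_sumset_iff by auto

lemma card_add_card_le_card_sumset_01:
  fixes I J :: "int set"
  assumes "finite I" "I \<noteq> {}" "finite J" "J \<noteq> {}"
  shows "card I + card J \<le> card (sumset (sumset I J) {0, 1})"
  using assms(1,2)
proof (induction I rule: finite_linorder_max_induct)
  case empty
  then show ?case by simp
next
  case (insert b I)
  let ?S = "\<lambda>I. sumset (sumset I J) {0, 1}"
  define top where "top = b + Max J + 1"
  have Max_J: "Max J \<in> J" "\<forall>j\<in>J. j \<le> Max J"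
    using assms(3,4) by auto
  have fin: "finite (?S (insert b I))"
    using insert.hyps(1) assms(3) by simp
  have top: "top \<in> ?S (insert b I)"
    using Max_J unfolding top_def mem_sumset_01 by blast
  show ?case
  proof (cases "I = {}")
    case True
    have "j + b \<in> ?S (insert b I)" if "j \<in> J" for j
      using that unfolding mem_sumset_01 by (auto simp: add.commute)
    then have sub: "insert top ((\<lambda>j. j + b) ` J) \<subseteq> ?S (insert b I)"
      using top by blast
    have "top \<notin> (\<lambda>j. j + b) ` J"
      using Max_J unfolding top_def by auto
    then have "card (insert top ((\<lambda>j. j + b) ` J)) = card J + 1"
      using assms(3) by (simp add: card_translate)
    then have "card J + 1 \<le> card (?S (insert b I))"
      using card_mono[OF fin sub] by simp
    then show ?thesis
      using True by simp
  next
    case False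
    have "n < top" if "n \<in> ?S I" for n
    proof -
      obtain i j where "i \<in> I" "j \<in> J" "n \<le> i + j + 1"
        using \<open>n \<in> ?S I\<close> unfolding mem_sumset_01 by force
      moreover have "i < b" "j \<le> Max J"
        using \<open>i \<in> I\<close> \<open>j \<in> J\<close> insert.hyps(2) Max_J by auto
      ultimately show ?thesis
        unfolding top_def by linarith
    qed
    then have "top \<notin> ?S I"
      by blast
    moreover have "?S I \<subseteq> ?S (insert b I)"
      by (intro sumset_mono) auto
    ultimately have "card (insert top (?S I)) \<le> card (?S (insert b I))"
      using card_mono[OF fin] top by blast
    then have "card (?S I) + 1 \<le> card (?S (insert b I))"
      using \<open>top \<notin> ?S I\<close> insert.hyps(1) assms(3) by simp
    moreover have "b \<notin> I"
      using insert.hyps(2) by blast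
    ultimately show ?thesis
      using insert.IH False insert.hyps(1) by simp
  qed
qed

lemma sum_eq_sum_excess:
  fixes a :: "'a \<Rightarrow> real"
  assumes "finite I" "\<forall>i\<in>I. m \<le> a i"
  shows "sum a I = (\<Sum>i\<in>{i\<in>I. m < a i}. a i - m) + m * card I"
proof -
  have "(\<Sum>i\<in>I. a i - m) = (\<Sum>i\<in>{i\<in>I. m < a i}. a i - m)"
    using assms by (intro sum.mono_neutral_right) auto
  moreover have "(\<Sum>i\<in>I. a i - m) = sum a I - m * card I"
    by (simp add: sum_subtractf)
  ultimately show ?thesis
    by linarith
qed

lemma sum_truncate_add_le:
  fixes u :: "'a \<Rightarrow> real"
  assumes "finite F" "W \<subseteq> F" "0 \<le> m" "\<forall>n\<in>F. 0 \<le> u n" "\<forall>n\<in>W. m \<le> u n"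
  shows "(\<Sum>n\<in>F. max (u n - m) 0) + m * card W \<le> sum u F"
proof -
  have "m * card W = (\<Sum>n\<in>F. if n \<in> W then m else 0)"
    using assms(1,2) by (simp add: sum.If_cases Int_absorb1)
  then have "(\<Sum>n\<in>F. max (u n - m) 0) + m * card W
      = (\<Sum>n\<in>F. max (u n - m) 0 + (if n \<in> W then m else 0))"
    by (simp add: sum.distrib)
  also have "\<dots> \<le> sum u F"
    using assms(3-5) by (intro sum_mono) auto
  finally show ?thesis .
qed

lemma sum_max_shift_truncate_le:
  fixes r :: "int \<Rightarrow> real"
  assumes "finite I" "I \<noteq> {}" "finite J" "J \<noteq> {}"
    and "finite F" "sumset (sumset I J) {0, 1} \<subseteq> F"
    and "0 \<le> m" "\<forall>n. 0 \<le> r n" "\<forall>i\<in>I. \<forall>j\<in>J. m \<le> r (i + j)"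
  shows "(\<Sum>n\<in>F. max (max (r n - m) 0) (max (r (n - 1) - m) 0)) + m * (card I + card J)
    \<le> (\<Sum>n\<in>F. max (r n) (r (n - 1)))"
proof -
  let ?W = "sumset (sumset I J) {0, 1}"
  have "max (max (r n - m) 0) (max (r (n - 1) - m) 0) = max (max (r n) (r (n - 1)) - m) 0" for n
    by linarith
  moreover have "m \<le> max (r n) (r (n - 1))" if "n \<in> ?W" for n
    using that assms(9) unfolding mem_sumset_01 by fastforce
  ultimately have "(\<Sum>n\<in>F. max (max (r n - m) 0) (max (r (n - 1) - m) 0)) + m * card ?W
      \<le> (\<Sum>n\<in>F. max (r n) (r (n - 1)))"
    using sum_truncate_add_le[of F ?W m "\<lambda>n. max (r n) (r (n - 1))"] assms(5-8)
    by (simp add: max.coboundedI1)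
  moreover have "m * (card I + card J) \<le> m * card ?W"
    using card_add_card_le_card_sumset_01[OF assms(1-4)] assms(7) by (simp add: mult_left_mono)
  ultimately show ?thesis
    by linarith
qed

lemma card_filter_add_card_filter_less:
  fixes a b :: "'a \<Rightarrow> real"
  assumes "finite I" "finite J" "m \<in> a ` I \<union> b ` J"
  shows "card {i\<in>I. m < a i} + card {j\<in>J. m < b j} < card I + card J"
proof -
  have "card {i\<in>I. m < a i} \<le> card I" "card {j\<in>J. m < b j} \<le> card J"
    using assms(1,2) by (simp_all add: card_mono)
  moreover have "{i\<in>I. m < a i} \<subset> I \<or> {j\<in>J. m < b j} \<subset> J"
    using assms(3) by auto
  then have "card {i\<in>I. m < a i} < card I \<or> card {j\<in>J. m < b j} < card J"
    using assms(1,2) psubset_card_mono by blast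
  ultimately show ?thesis
    by linarith
qed

text \<open>The bottom layer \<open>m\<close> of \<open>a\<close> and \<open>b\<close> contributes \<open>m (|I| + |J|) \<le> m |I + J + {0, 1}|\<close>;
  the rest is handled by induction after lowering all values by \<open>m\<close>.\<close>

lemma sum_add_sum_le_sum_max_shift:
  fixes a b r :: "int \<Rightarrow> real"
  assumes "finite I" "I \<noteq> {}" "finite J" "J \<noteq> {}"
    and "\<forall>i\<in>I. 0 < a i \<and> a i \<le> M" "\<exists>i\<in>I. a i = M"
    and "\<forall>j\<in>J. 0 < b j \<and> b j \<le> M" "\<exists>j\<in>J. b j = M"
    and "\<forall>n. 0 \<le> r n" "\<forall>i\<in>I. \<forall>j\<in>J. min (a i) (b j) \<le> r (i + j)"
    and "finite F" "sumset (sumset I J) {0, 1} \<subseteq> F"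
  shows "sum a I + sum b J \<le> (\<Sum>n\<in>F. max (r n) (r (n - 1)))"
  using assms
proof (induction "card I + card J" arbitrary: I J a b r M rule: less_induct)
  case less
  define m where "m = Min (a ` I \<union> b ` J)"
  have fin: "finite (a ` I \<union> b ` J)"
    using less.prems(1,3) by simp
  have m_attained: "m \<in> a ` I \<union> b ` J"
    unfolding m_def using less.prems(2) by (intro Min_in fin) auto
  have m_le: "\<forall>i\<in>I. m \<le> a i" "\<forall>j\<in>J. m \<le> b j"
    unfolding m_def using fin by auto
  have "0 < m" "m \<le> M"
    using m_attained less.prems(5,7) by auto
  define I' where "I' = {i\<in>I. m < a i}"
  define J' where "J' = {j\<in>J. m < b j}"
  define r' where "r' = (\<lambda>n. max (r n - m) 0)"
  have "(\<Sum>i\<in>I'. a i - m) + (\<Sum>j\<in>J'. b j - m) \<le> (\<Sum>n\<in>F. max (r' n) (r' (n - 1)))"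
  proof (cases "m = M")
    case True
    then have "I' = {}" "J' = {}"
      using less.prems(5,7) unfolding I'_def J'_def by auto
    then show ?thesis
      unfolding r'_def by (simp add: sum_nonneg)
  next
    case False
    then have "m < M"
      using \<open>m \<le> M\<close> by simp
    have "card I' + card J' < card I + card J"
      unfolding I'_def J'_def using less.prems(1,3) m_attained
      by (rule card_filter_add_card_filter_less)
    then show ?thesis
    proof (rule less.hyps)
      show "finite I'" "finite J'" "finite F"
        using less.prems(1,3,11) unfolding I'_def J'_def by auto
      show "I' \<noteq> {}" "\<exists>i\<in>I'. a i - m = M - m" "J' \<noteq> {}" "\<exists>j\<in>J'. b j - m = M - m"
        using less.prems(6,8) \<open>m < M\<close> unfolding I'_def J'_def by auto
      show "\<forall>i\<in>I'. 0 < a i - m \<and> a i - m \<le> M - m" "\<forall>j\<in>J'. 0 < b j - m \<and> b j - m \<le> M - m"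
        using less.prems(5,7) unfolding I'_def J'_def by auto
      show "\<forall>n. 0 \<le> r' n"
        unfolding r'_def by simp
      show "\<forall>i\<in>I'. \<forall>j\<in>J'. min (a i - m) (b j - m) \<le> r' (i + j)"
      proof (intro ballI)
        fix i j assume "i \<in> I'" "j \<in> J'"
        then have "min (a i) (b j) \<le> r (i + j)"
          using less.prems(10) unfolding I'_def J'_def by blast
        then show "min (a i - m) (b j - m) \<le> r' (i + j)"
          unfolding r'_def by linarith
      qed
      have "sumset (sumset I' J') {0, 1} \<subseteq> sumset (sumset I J) {0, 1}"
        unfolding I'_def J'_def by (intro sumset_mono) auto
      then show "sumset (sumset I' J') {0, 1} \<subseteq> F"
        using less.prems(12) by blast
    qed
  qed
  moreover have "m \<le> r (i + j)" if "i \<in> I" "j \<in> J" for i j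
    using m_le less.prems(10) that by (meson min.boundedI order_trans)
  then have "(\<Sum>n\<in>F. max (r' n) (r' (n - 1))) + m * (card I + card J)
      \<le> (\<Sum>n\<in>F. max (r n) (r (n - 1)))"
    unfolding r'_def using less.prems(1-4,9,11,12) \<open>0 < m\<close>
    by (intro sum_max_shift_truncate_le) auto
  ultimately show ?case
    using sum_eq_sum_excess[OF less.prems(1) m_le(1)] sum_eq_sum_excess[OF less.prems(3) m_le(2)]
    unfolding I'_def J'_def by (simp add: algebra_simps)
qed

lemma min_le_sqrt_mult:
  fixes x y :: real
  assumes "0 \<le> x" "0 \<le> y"
  shows "min x y \<le> sqrt (x * y)"
proof -
  have "min x y * min x y \<le> x * y"
    using assms by (intro mult_mono) auto
  then have "sqrt (min x y * min x y) \<le> sqrt (x * y)"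
    by (rule real_sqrt_le_mono)
  then show ?thesis
    using assms by simp
qed

lemma sqrt_mult_le_of_le:
  fixes x y t :: real
  assumes "0 \<le> x" "0 \<le> y" "x \<le> t" "y \<le> t"
  shows "sqrt (x * y) \<le> t"
proof -
  have "sqrt (x * y) \<le> sqrt (t * t)"
    using assms by (intro real_sqrt_le_mono mult_mono) auto
  then show ?thesis
    using assms by simp
qed

lemma two_sqrt_mult_le_weighted_sum:
  fixes x y A B :: real
  assumes "0 < x" "0 < y" "0 \<le> A" "0 \<le> B"
  shows "2 * sqrt (A * B) \<le> sqrt (x * y) * (A / x + B / y)"
proof -
  have "sqrt (x * y) * (2 * sqrt (A / x * (B / y))) \<le> sqrt (x * y) * (A / x + B / y)"
    using arith_geo_mean_sqrt[of "A / x" "B / y"] assms by (intro mult_left_mono) auto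
  moreover have "sqrt (x * y) * sqrt (A / x * (B / y)) = sqrt (A * B)"
    using assms by (simp add: real_sqrt_mult[symmetric])
  ultimately show ?thesis
    by (simp add: algebra_simps)
qed

text \<open>After scaling \<open>a\<close> and \<open>b\<close> to the common maximum \<open>1\<close>, the previous lemma applies since
  \<open>min \<le> sqrt\<close>, and AM-GM turns the resulting bound on \<open>\<Sum>a / x + \<Sum>b / y\<close> into one on the
  geometric mean.\<close>

lemma two_sqrt_sum_mult_sum_le:
  fixes a b p :: "int \<Rightarrow> real"
  assumes "finite I" "I \<noteq> {}" "finite J" "J \<noteq> {}"
    and "\<forall>i\<in>I. 0 < a i" "\<forall>j\<in>J. 0 < b j"
    and "\<forall>n. 0 \<le> p n" "\<forall>i\<in>I. \<forall>j\<in>J. sqrt (a i * b j) \<le> p (i + j)"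
    and "finite F" "sumset (sumset I J) {0, 1} \<subseteq> F"
  shows "2 * sqrt (sum a I * sum b J) \<le> (\<Sum>n\<in>F. max (p n) (p (n - 1)))"
proof -
  define x where "x = Max (a ` I)"
  define y where "y = Max (b ` J)"
  have x: "x \<in> a ` I" "\<forall>i\<in>I. a i \<le> x" and y: "y \<in> b ` J" "\<forall>j\<in>J. b j \<le> y"
    using assms(1-4) unfolding x_def y_def by auto
  have "0 < x" "0 < y"
    using x(1) y(1) assms(5,6) by auto
  define \<mu> where "\<mu> = sqrt (x * y)"
  have "0 < \<mu>"
    unfolding \<mu>_def using \<open>0 < x\<close> \<open>0 < y\<close> by simp
  have "(\<Sum>i\<in>I. a i / x) + (\<Sum>j\<in>J. b j / y) \<le> (\<Sum>n\<in>F. max (p n / \<mu>) (p (n - 1) / \<mu>))"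
  proof (rule sum_add_sum_le_sum_max_shift[where M = 1])
    show "\<forall>i\<in>I. 0 < a i / x \<and> a i / x \<le> 1" "\<exists>i\<in>I. a i / x = 1"
      using x assms(5) \<open>0 < x\<close> by auto
    show "\<forall>j\<in>J. 0 < b j / y \<and> b j / y \<le> 1" "\<exists>j\<in>J. b j / y = 1"
      using y assms(6) \<open>0 < y\<close> by auto
    show "\<forall>n. 0 \<le> p n / \<mu>"
      using assms(7) \<open>0 < \<mu>\<close> by simp
    show "\<forall>i\<in>I. \<forall>j\<in>J. min (a i / x) (b j / y) \<le> p (i + j) / \<mu>"
    proof (intro ballI)
      fix i j assume ij: "i \<in> I" "j \<in> J"
      have "min (a i / x) (b j / y) \<le> sqrt (a i / x * (b j / y))"
        using ij assms(5,6) \<open>0 < x\<close> \<open>0 < y\<close> by (intro min_le_sqrt_mult) auto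
      also have "\<dots> = sqrt (a i * b j) / \<mu>"
        unfolding \<mu>_def by (simp add: real_sqrt_divide real_sqrt_mult)
      also have "\<dots> \<le> p (i + j) / \<mu>"
        using assms(8) ij \<open>0 < \<mu>\<close> by (simp add: divide_right_mono)
      finally show "min (a i / x) (b j / y) \<le> p (i + j) / \<mu>" .
    qed
  qed (use assms in auto)
  also have "\<dots> = (\<Sum>n\<in>F. max (p n) (p (n - 1))) / \<mu>"
    using \<open>0 < \<mu>\<close> by (simp add: max_divide_distrib_right sum_divide_distrib)
  finally have "\<mu> * (sum a I / x + sum b J / y) \<le> (\<Sum>n\<in>F. max (p n) (p (n - 1)))"
    using \<open>0 < \<mu>\<close> by (simp add: sum_divide_distrib[symmetric] le_divide_eq mult.commute)
  moreover have "2 * sqrt (sum a I * sum b J) \<le> \<mu> * (sum a I / x + sum b J / y)"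
    unfolding \<mu>_def using \<open>0 < x\<close> \<open>0 < y\<close> assms(5,6)
    by (intro two_sqrt_mult_le_weighted_sum sum_nonneg) auto
  ultimately show ?thesis
    by linarith
qed

text \<open>Unequal weights \<open>c\<^sub>0, c\<^sub>1\<close> in the inequality below are reduced to the previous case by
  replacing every integer \<open>i\<close> with the block \<open>k i, \<dots>, k i + k - 1\<close> carrying geometric weights,
  where \<open>r\<^sup>k = c\<^sub>1 / c\<^sub>0\<close>, and letting \<open>k \<rightarrow> \<infinity>\<close>.\<close>

definition blocks :: "nat \<Rightarrow> int set \<Rightarrow> int set" where
  "blocks k I = {m. m div int k \<in> I}"

definition blowup :: "nat \<Rightarrow> real \<Rightarrow> (int \<Rightarrow> real) \<Rightarrow> int \<Rightarrow> real" where
  "blowup k q f m = f (m div int k) * q ^ nat (m mod int k)"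

lemma block_div_mod:
  assumes "0 \<le> u" "u < int k"
  shows "(int k * i + u) div int k = i" "(int k * i + u) mod int k = u"
  using assms by (simp_all add: div_add_self1 mult.commute)

lemma blowup_block: "t < k \<Longrightarrow> blowup k q f (int k * i + int t) = f i * q ^ t"
  unfolding blowup_def by (simp add: block_div_mod)

lemma block_mem_blocks_iff: "t < k \<Longrightarrow> int k * i + int t \<in> blocks k I \<longleftrightarrow> i \<in> I"
  unfolding blocks_def by (simp add: block_div_mod)

lemma blocks_eq_image:
  assumes "0 < k"
  shows "blocks k I = (\<lambda>(i, t). int k * i + int t) ` (I \<times> {..<k})"
proof (intro equalityI subsetI)
  fix m assume "m \<in> blocks k I"
  moreover have "m = int k * (m div int k) + int (nat (m mod int k))" "nat (m mod int k) < k"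
    using assms by (simp_all add: nat_less_iff)
  ultimately show "m \<in> (\<lambda>(i, t). int k * i + int t) ` (I \<times> {..<k})"
    unfolding blocks_def by force
qed (auto simp: block_mem_blocks_iff)

lemma inj_on_block: "inj_on (\<lambda>(i, t). int k * i + int t) (I \<times> {..<k})"
  by (rule inj_onI) (auto dest: arg_cong[where f = "\<lambda>m. m div int k"]
      arg_cong[where f = "\<lambda>m. m mod int k"] simp: block_div_mod)

lemma finite_blocks: "0 < k \<Longrightarrow> finite I \<Longrightarrow> finite (blocks k I)"
  by (simp add: blocks_eq_image)

lemma sum_blocks:
  assumes "0 < k"
  shows "(\<Sum>m\<in>blocks k I. f m) = (\<Sum>i\<in>I. \<Sum>t<k. f (int k * i + int t))"
  unfolding blocks_eq_image[OF assms] sum.reindex[OF inj_on_block]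
  by (simp add: sum.cartesian_product prod.case_distrib)

lemma sum_blowup:
  assumes "0 < k"
  shows "sum (blowup k q f) (blocks k I) = sum f I * (\<Sum>t<k. q ^ t)"
proof -
  have "sum f I * (\<Sum>t<k. q ^ t) = (\<Sum>i\<in>I. f i * (\<Sum>t<k. q ^ t))"
    by (rule sum_distrib_right)
  also have "\<dots> = (\<Sum>i\<in>I. \<Sum>t<k. f i * q ^ t)"
    by (simp add: sum_distrib_left)
  finally have "sum f I * (\<Sum>t<k. q ^ t) = (\<Sum>i\<in>I. \<Sum>t<k. f i * q ^ t)" .
  then show ?thesis
    unfolding sum_blocks[OF assms] by (simp add: blowup_block)
qed

lemma blocks_mono: "I \<subseteq> J \<Longrightarrow> blocks k I \<subseteq> blocks k J"
  unfolding blocks_def by auto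

lemma sumset_01_blocks:
  assumes "0 < k"
  shows "sumset (sumset (blocks k I) (blocks k J)) {0, 1} \<subseteq> blocks k (sumset (sumset I J) {0, 1})"
proof
  fix m assume "m \<in> sumset (sumset (blocks k I) (blocks k J)) {0, 1}"
  then obtain m1 m2 e where "m1 \<in> blocks k I" "m2 \<in> blocks k J" "e \<in> {0, 1}" "m = m1 + m2 + e"
    unfolding sumset_sumset_iff by blast
  then obtain i t j t' where ij: "i \<in> I" "j \<in> J" and tt': "t < k" "t' < k"
    and m: "m = int k * (i + j) + (int t + int t' + e)" and e: "0 \<le> e" "e \<le> 1"
    unfolding blocks_eq_image[OF assms] by (auto simp: algebra_simps)
  show "m \<in> blocks k (sumset (sumset I J) {0, 1})"
  proof (cases "int t + int t' + e < int k")
    case True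
    then have "m div int k = i + j"
      using block_div_mod(1) m e by simp
    then show ?thesis
      using ij unfolding blocks_def mem_sumset_01 by auto
  next
    case False
    then have "m = int k * (i + j + 1) + (int t + int t' + e - int k)"
      "0 \<le> int t + int t' + e - int k" "int t + int t' + e - int k < int k"
      using m tt' e by (auto simp: algebra_simps)
    then have "m div int k = i + j + 1"
      using block_div_mod(1) by metis
    then show ?thesis
      using ij unfolding blocks_def mem_sumset_01 by auto
  qed
qed

lemma sqrt_blowup_mult_le:
  fixes a b p :: "int \<Rightarrow> real"
  assumes "0 < r" "t < k" "t' < k" "0 \<le> a i" "0 \<le> b j"
    and "sqrt (a i * b j) \<le> p (i + j)" "r ^ k * sqrt (a i * b j) \<le> p (i + j + 1)"
  shows "sqrt (blowup k (r\<^sup>2) a (int k * i + int t) * blowup k (r\<^sup>2) b (int k * j + int t'))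
    \<le> blowup k r p (int k * i + int t + (int k * j + int t'))"
proof -
  have lhs: "sqrt (blowup k (r\<^sup>2) a (int k * i + int t) * blowup k (r\<^sup>2) b (int k * j + int t'))
      = r ^ (t + t') * sqrt (a i * b j)"
    using assms(1-3) by (simp add: blowup_block real_sqrt_mult real_sqrt_power power_add)
  show ?thesis
  proof (cases "t + t' < k")
    case True
    have "int k * i + int t + (int k * j + int t') = int k * (i + j) + int (t + t')"
      by (simp add: algebra_simps)
    then have "blowup k r p (int k * i + int t + (int k * j + int t')) = p (i + j) * r ^ (t + t')"
      using blowup_block[OF True] by metis
    then show ?thesis
      unfolding lhs using assms(1,6) by (simp add: mult.commute)
  next
    case False
    have "int k * i + int t + (int k * j + int t') = int k * (i + j + 1) + int (t + t' - k)"
      using False by (simp add: algebra_simps)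
    moreover have "t + t' - k < k"
      using assms(2,3) by simp
    ultimately have "blowup k r p (int k * i + int t + (int k * j + int t'))
        = p (i + j + 1) * r ^ (t + t' - k)"
      using blowup_block by metis
    moreover have "r ^ (t + t') = r ^ k * r ^ (t + t' - k)"
      using False by (simp flip: power_add)
    ultimately show ?thesis
      unfolding lhs using assms(1,7) by (simp add: mult_right_mono mult.commute mult.left_commute)
  qed
qed

lemma max_blowup_shift_le:
  fixes p :: "int \<Rightarrow> real"
  assumes "0 < r" "u < k" "\<forall>n. 0 \<le> p n"
  shows "max (blowup k r p (int k * n + int u)) (blowup k r p (int k * n + int u - 1))
    \<le> max 1 (1 / r) * r ^ u * p n + (if u = 0 then r ^ (k - 1) * p (n - 1) else 0)"
proof -
  let ?\<rho> = "max 1 (1 / r)"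
  have cur: "blowup k r p (int k * n + int u) = p n * r ^ u"
    using assms(2) by (rule blowup_block)
  have "r ^ u * 1 \<le> r ^ u * ?\<rho>"
    using assms(1) by (intro mult_left_mono) auto
  then have "p n * r ^ u \<le> ?\<rho> * r ^ u * p n"
    using assms(3) by (simp add: mult.commute mult_left_mono)
  show ?thesis
  proof (cases "u = 0")
    case True
    have "int k * n + int u - 1 = int k * (n - 1) + int (k - 1)"
      using True assms(2) by (simp add: algebra_simps)
    then have "blowup k r p (int k * n + int u - 1) = p (n - 1) * r ^ (k - 1)"
      using assms(2) by (simp only:) (rule blowup_block, simp)
    then show ?thesis
      using True cur \<open>p n * r ^ u \<le> ?\<rho> * r ^ u * p n\<close> assms(1,3)
      by (simp add: mult.commute add_increasing add_increasing2)
  next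
    case False
    have "int k * n + int u - 1 = int k * n + int (u - 1)"
      using False by simp
    then have prev: "blowup k r p (int k * n + int u - 1) = p n * r ^ (u - 1)"
      using assms(2) by (simp only:) (rule blowup_block, simp)
    have "r ^ (u - 1) = r ^ u * (1 / r)"
      using False assms(1) by (simp add: power_eq_if)
    also have "\<dots> \<le> r ^ u * ?\<rho>"
      using assms(1) by (intro mult_left_mono) auto
    also have "\<dots> = ?\<rho> * r ^ u"
      by (rule mult.commute)
    finally have "p n * r ^ (u - 1) \<le> ?\<rho> * r ^ u * p n"
      using assms(3) by (simp add: mult.commute mult_left_mono)
    then show ?thesis
      using False cur prev \<open>p n * r ^ u \<le> ?\<rho> * r ^ u * p n\<close> by simp
  qed
qed

lemma sum_shift_le:
  fixes p :: "int \<Rightarrow> real"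
  assumes "finite F" "\<forall>n. 0 \<le> p n" "\<forall>n. n \<notin> F \<longrightarrow> p n = 0"
  shows "(\<Sum>n\<in>F. p (n - 1)) \<le> sum p F"
proof -
  have "(\<Sum>n\<in>F. p (n - 1)) = (\<Sum>n\<in>(\<lambda>n. n - 1) ` F. p n)"
    by (simp add: sum.reindex inj_on_def)
  also have "\<dots> = (\<Sum>n\<in>(\<lambda>n. n - 1) ` F \<inter> F. p n)"
    using assms(1,3) by (intro sum.mono_neutral_right) auto
  also have "\<dots> \<le> sum p F"
    using assms(1,2) by (intro sum_mono2) auto
  finally show ?thesis .
qed

lemma sum_max_shift_blowup_le:
  fixes p :: "int \<Rightarrow> real"
  assumes "0 < k" "0 < r" "finite F" "\<forall>n. 0 \<le> p n" "\<forall>n. n \<notin> F \<longrightarrow> p n = 0"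
  shows "(\<Sum>m\<in>blocks k F. max (blowup k r p m) (blowup k r p (m - 1)))
    \<le> (max 1 (1 / r) * (\<Sum>u<k. r ^ u) + r ^ (k - 1)) * sum p F"
proof -
  let ?\<rho> = "max 1 (1 / r)"
  have "(\<Sum>m\<in>blocks k F. max (blowup k r p m) (blowup k r p (m - 1)))
      \<le> (\<Sum>n\<in>F. \<Sum>u<k. ?\<rho> * r ^ u * p n + (if u = 0 then r ^ (k - 1) * p (n - 1) else 0))"
    unfolding sum_blocks[OF assms(1)] using assms(2,4) by (intro sum_mono max_blowup_shift_le) auto
  also have "\<dots> = (\<Sum>n\<in>F. ?\<rho> * (\<Sum>u<k. r ^ u) * p n + r ^ (k - 1) * p (n - 1))"
    using assms(1) by (simp add: sum.distrib sum_distrib_left sum_distrib_right)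
  also have "\<dots> = ?\<rho> * (\<Sum>u<k. r ^ u) * sum p F + r ^ (k - 1) * (\<Sum>n\<in>F. p (n - 1))"
    by (simp add: sum.distrib sum_distrib_left)
  also have "\<dots> \<le> ?\<rho> * (\<Sum>u<k. r ^ u) * sum p F + r ^ (k - 1) * sum p F"
    using sum_shift_le[OF assms(3-5)] assms(2) by (simp add: mult_left_mono)
  finally show ?thesis
    by (simp add: algebra_simps)
qed

lemma two_sqrt_sum_mult_sum_le_blocks:
  fixes a b p :: "int \<Rightarrow> real"
  assumes "finite I" "I \<noteq> {}" "finite J" "J \<noteq> {}" "\<forall>i\<in>I. 0 < a i" "\<forall>j\<in>J. 0 < b j"
    and "finite F" "\<forall>n. 0 \<le> p n" "\<forall>n. n \<notin> F \<longrightarrow> p n = 0" "0 < k" "0 < r"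
    and "\<forall>i\<in>I. \<forall>j\<in>J. sqrt (a i * b j) \<le> p (i + j)"
    and "\<forall>i\<in>I. \<forall>j\<in>J. r ^ k * sqrt (a i * b j) \<le> p (i + j + 1)"
  shows "2 * sqrt (sum a I * sum b J) * (\<Sum>t<k. r ^ (2 * t))
    \<le> (max 1 (1 / r) * (\<Sum>u<k. r ^ u) + r ^ (k - 1)) * sum p F"
proof -
  have W_F: "sumset (sumset I J) {0, 1} \<subseteq> F"
  proof
    fix n assume "n \<in> sumset (sumset I J) {0, 1}"
    then obtain i j where ij: "i \<in> I" "j \<in> J" "n = i + j \<or> n = i + j + 1"
      unfolding mem_sumset_01 by blast
    have "0 < sqrt (a i * b j)"
      using ij assms(5,6) by simp
    then have "0 < r ^ k * sqrt (a i * b j)"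
      using assms(11) by simp
    have "sqrt (a i * b j) \<le> p (i + j)" "r ^ k * sqrt (a i * b j) \<le> p (i + j + 1)"
      using ij(1,2) assms(12,13) by auto
    from ij(3) have "0 < p n"
    proof
      assume "n = i + j"
      show ?thesis
        unfolding \<open>n = i + j\<close> using \<open>0 < sqrt (a i * b j)\<close> \<open>sqrt (a i * b j) \<le> p (i + j)\<close> by linarith
    next
      assume "n = i + j + 1"
      show ?thesis
        unfolding \<open>n = i + j + 1\<close> using \<open>0 < r ^ k * sqrt (a i * b j)\<close> \<open>r ^ k * sqrt (a i * b j) \<le> p (i + j + 1)\<close> by linarith
    qed
    then show "n \<in> F"
      using assms(9) by force
  qed
  have "2 * sqrt (sum (blowup k (r\<^sup>2) a) (blocks k I) * sum (blowup k (r\<^sup>2) b) (blocks k J))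
      \<le> (\<Sum>m\<in>blocks k F. max (blowup k r p m) (blowup k r p (m - 1)))"
  proof (rule two_sqrt_sum_mult_sum_le)
    show "finite (blocks k I)" "finite (blocks k J)" "finite (blocks k F)"
      using assms(1,3,7,10) by (simp_all add: finite_blocks)
    show "blocks k I \<noteq> {}" "blocks k J \<noteq> {}"
      using assms(2,4,10) unfolding blocks_eq_image[OF assms(10)] by auto
    show "\<forall>m\<in>blocks k I. 0 < blowup k (r\<^sup>2) a m" "\<forall>m\<in>blocks k J. 0 < blowup k (r\<^sup>2) b m"
      using assms(5,6,11) unfolding blocks_def blowup_def by auto
    show "\<forall>m. 0 \<le> blowup k r p m"
      using assms(8,11) unfolding blowup_def by simp
    show "\<forall>m1\<in>blocks k I. \<forall>m2\<in>blocks k J.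
        sqrt (blowup k (r\<^sup>2) a m1 * blowup k (r\<^sup>2) b m2) \<le> blowup k r p (m1 + m2)"
      unfolding blocks_eq_image[OF assms(10)]
      using assms(5,6,11-13) by (auto intro!: sqrt_blowup_mult_le simp: less_imp_le)
    show "sumset (sumset (blocks k I) (blocks k J)) {0, 1} \<subseteq> blocks k F"
      using sumset_01_blocks[OF assms(10)] blocks_mono[OF W_F] by blast
  qed
  also have "\<dots> \<le> (max 1 (1 / r) * (\<Sum>u<k. r ^ u) + r ^ (k - 1)) * sum p F"
    by (rule sum_max_shift_blowup_le[OF assms(10,11,7-9)])
  moreover have "(\<Sum>t<k. r ^ (2 * t)) = (\<Sum>t<k. (r\<^sup>2) ^ t)"
    by (simp add: power_mult)
  ultimately show ?thesis
    unfolding sum_blowup[OF assms(10)]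
    by (simp add: real_sqrt_mult sum_nonneg mult_ac)
qed

lemma sum_even_powers_mult: "(\<Sum>t<k. (r::real) ^ (2 * t)) * (1 + r) = (\<Sum>u<k. r ^ u) * (1 + r ^ k)"
proof -
  have "(\<Sum>t<k. r ^ (2 * t)) * (1 + r) = (\<Sum>u<2 * k. r ^ u)"
    by (induction k) (simp_all add: ring_distribs)
  moreover have "(\<Sum>u<k + m. r ^ u) = (\<Sum>u<k. r ^ u) + r ^ k * (\<Sum>u<m. r ^ u)" for m
    by (induction m) (auto simp: power_add ring_distribs)
  ultimately show ?thesis
    by (simp add: mult_2 ring_distribs)
qed

lemma real_mult_min_le_sum_powers:
  fixes r :: real
  assumes "0 < r"
  shows "real k * min 1 (r ^ k) \<le> (\<Sum>u<k. r ^ u)"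
proof -
  have "min 1 (r ^ k) \<le> r ^ u" if "u < k" for u
  proof (cases "1 \<le> r")
    case True
    then show ?thesis
      by (simp add: min.coboundedI1)
  next
    case False
    then have "r ^ k \<le> r ^ u"
      using that assms by (intro power_decreasing) auto
    then show ?thesis
      by (simp add: min.coboundedI2)
  qed
  then have "(\<Sum>u<k. min 1 (r ^ k)) \<le> (\<Sum>u<k. r ^ u)"
    by (intro sum_mono) auto
  then show ?thesis
    by simp
qed

lemma weighted_sqrt_sum_mult_sum_le_approx:
  fixes a b p :: "int \<Rightarrow> real" and \<gamma> r :: real and k :: nat
  assumes "finite I" "I \<noteq> {}" "finite J" "J \<noteq> {}" "\<forall>i\<in>I. 0 < a i" "\<forall>j\<in>J. 0 < b j"
    and "finite F" "\<forall>n. 0 \<le> p n" "\<forall>n. n \<notin> F \<longrightarrow> p n = 0" "0 < \<gamma>" "0 < k"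
    and "\<forall>i\<in>I. \<forall>j\<in>J. sqrt (a i * b j) \<le> p (i + j)"
    and "\<forall>i\<in>I. \<forall>j\<in>J. \<gamma> * sqrt (a i * b j) \<le> p (i + j + 1)"
  defines "r \<equiv> \<gamma> powr (1 / real k)"
  shows "2 * sqrt (sum a I * sum b J) * (1 + \<gamma>) / (1 + r)
    \<le> (max 1 (1 / r) + \<gamma> / (r * (real k * min 1 \<gamma>))) * sum p F"
proof -
  define \<sigma> where "\<sigma> = sqrt (sum a I * sum b J)"
  define X where "X = (\<Sum>u<k. r ^ u)"
  have "0 < r"
    unfolding r_def using assms(10) by simp
  have r_k: "r ^ k = \<gamma>"
    unfolding r_def using assms(10,11) by (simp add: powr_realpow[symmetric] powr_powr)
  have "0 \<le> \<sigma>" "0 \<le> sum p F"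
    unfolding \<sigma>_def using assms(5,6,8) by (simp_all add: sum_nonneg less_imp_le)
  have "r * r ^ (k - 1) = \<gamma>"
    using r_k assms(11) by (cases k) simp_all
  then have "r ^ (k - 1) = \<gamma> / r"
    using \<open>0 < r\<close> by (simp add: eq_divide_eq mult.commute)
  have X_ge: "real k * min 1 \<gamma> \<le> X"
    unfolding X_def r_k[symmetric] using \<open>0 < r\<close> by (rule real_mult_min_le_sum_powers)
  have "0 < real k * min 1 \<gamma>"
    using assms(10,11) by simp
  then have "0 < X"
    using X_ge by linarith
  define N where "N = (\<Sum>t<k. r ^ (2 * t))"
  have "X * (1 + \<gamma>) = N * (1 + r)"
    using sum_even_powers_mult[where r = r and k = k] r_k unfolding N_def X_def by simp
  have "2 * \<sigma> * (1 + \<gamma>) / (1 + r) = 2 * \<sigma> * (X * (1 + \<gamma>)) / (X * (1 + r))"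
    using \<open>0 < X\<close> by simp
  also have "\<dots> = 2 * \<sigma> * N / X"
    unfolding \<open>X * (1 + \<gamma>) = N * (1 + r)\<close> using \<open>0 < r\<close> by simp
  also have "\<dots> \<le> (max 1 (1 / r) * X + \<gamma> / r) * sum p F / X"
    using two_sqrt_sum_mult_sum_le_blocks[OF assms(1-9,11) \<open>0 < r\<close> assms(12)] assms(13) \<open>0 < X\<close>
    unfolding \<sigma>_def N_def X_def r_k \<open>r ^ (k - 1) = \<gamma> / r\<close> by (simp add: divide_right_mono)
  also have "\<dots> = (max 1 (1 / r) + \<gamma> / (r * X)) * sum p F"
    using \<open>0 < X\<close> \<open>0 < r\<close> by (simp add: field_simps)
  also have "\<dots> \<le> (max 1 (1 / r) + \<gamma> / (r * (real k * min 1 \<gamma>))) * sum p F"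
    using X_ge \<open>0 < real k * min 1 \<gamma>\<close> \<open>0 < r\<close> assms(10) \<open>0 \<le> sum p F\<close>
    by (intro mult_right_mono add_left_mono divide_left_mono mult_left_mono) auto
  finally show ?thesis
    unfolding \<sigma>_def .
qed

lemma weighted_sqrt_sum_mult_sum_le:
  fixes a b s :: "int \<Rightarrow> real"
  assumes "finite I" "I \<noteq> {}" "finite J" "J \<noteq> {}" "\<forall>i\<in>I. 0 < a i" "\<forall>j\<in>J. 0 < b j"
    and "finite F" "\<forall>n. 0 \<le> s n" "\<forall>n. n \<notin> F \<longrightarrow> s n = 0" "0 < c\<^sub>0" "0 < c\<^sub>1"
    and "\<forall>i\<in>I. \<forall>j\<in>J. c\<^sub>0 * sqrt (a i * b j) \<le> s (i + j)"
    and "\<forall>i\<in>I. \<forall>j\<in>J. c\<^sub>1 * sqrt (a i * b j) \<le> s (i + j + 1)"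
  shows "(c\<^sub>0 + c\<^sub>1) * sqrt (sum a I * sum b J) \<le> sum s F"
proof -
  define \<sigma> where "\<sigma> = sqrt (sum a I * sum b J)"
  define \<gamma> where "\<gamma> = c\<^sub>1 / c\<^sub>0"
  define p where "p = (\<lambda>n. s n / c\<^sub>0)"
  define r where "r = (\<lambda>k::nat. \<gamma> powr (1 / real k))"
  have "0 < \<gamma>"
    unfolding \<gamma>_def using assms(10,11) by simp
  have bound: "2 * \<sigma> * (1 + \<gamma>) / (1 + r k)
      \<le> (max 1 (1 / r k) + \<gamma> / (r k * (real k * min 1 \<gamma>))) * sum p F" if "0 < k" for k
    unfolding \<sigma>_def r_def
  proof (rule weighted_sqrt_sum_mult_sum_le_approx[OF assms(1-7) _ _ \<open>0 < \<gamma>\<close> that])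
    show "\<forall>n. 0 \<le> p n" "\<forall>n. n \<notin> F \<longrightarrow> p n = 0"
      unfolding p_def using assms(8-10) by simp_all
    show "\<forall>i\<in>I. \<forall>j\<in>J. sqrt (a i * b j) \<le> p (i + j)"
      "\<forall>i\<in>I. \<forall>j\<in>J. \<gamma> * sqrt (a i * b j) \<le> p (i + j + 1)"
      unfolding p_def \<gamma>_def using assms(10,12,13) by (simp_all add: field_simps)
  qed
  have r: "r \<longlonglongrightarrow> 1"
  proof -
    have "(\<lambda>k. \<gamma> powr (1 / real k)) \<longlonglongrightarrow> \<gamma> powr 0"
      using \<open>0 < \<gamma>\<close> by (intro tendsto_intros lim_const_over_n) auto
    then show ?thesis
      unfolding r_def using \<open>0 < \<gamma>\<close> by simp
  qed
  have "(\<lambda>k. \<gamma> / r k * (1 / min 1 \<gamma> / real k)) \<longlonglongrightarrow> \<gamma> / 1 * 0"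
    using r by (intro tendsto_intros lim_const_over_n) auto
  then have "(\<lambda>k. \<gamma> / (r k * (real k * min 1 \<gamma>))) \<longlonglongrightarrow> 0"
    by (simp add: field_simps)
  then have "(\<lambda>k. (max 1 (1 / r k) + \<gamma> / (r k * (real k * min 1 \<gamma>))) * sum p F)
      \<longlonglongrightarrow> (max 1 (1 / 1) + 0) * sum p F"
    using r by (intro tendsto_intros) auto
  moreover have "(\<lambda>k. 2 * \<sigma> * (1 + \<gamma>) / (1 + r k)) \<longlonglongrightarrow> 2 * \<sigma> * (1 + \<gamma>) / (1 + 1)"
    using r by (intro tendsto_intros) auto
  ultimately have "2 * \<sigma> * (1 + \<gamma>) / (1 + 1) \<le> (max 1 (1 / 1) + 0) * sum p F"
    using bound by (intro LIMSEQ_le) (auto intro: exI[of _ 1])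
  then have "\<sigma> * (1 + \<gamma>) \<le> sum p F"
    by simp
  moreover have "sum p F = sum s F / c\<^sub>0"
    unfolding p_def by (simp add: sum_divide_distrib)
  moreover have "\<sigma> * (1 + \<gamma>) = (c\<^sub>0 + c\<^sub>1) * \<sigma> / c\<^sub>0"
    unfolding \<gamma>_def using assms(10) by (simp add: field_simps)
  ultimately show ?thesis
    unfolding \<sigma>_def using assms(10) by (simp add: divide_le_cancel)
qed

section \<open>Subgroups, cosets and integer multiples\<close>

lemma subgrp_zero: "subgrp H \<Longrightarrow> 0 \<in> H"
  unfolding subgrp_def by blast

lemma subgrp_add: "subgrp H \<Longrightarrow> x \<in> H \<Longrightarrow> y \<in> H \<Longrightarrow> x + y \<in> H"
  unfolding subgrp_def by blast

lemma subgrp_uminus: "subgrp H \<Longrightarrow> x \<in> H \<Longrightarrow> - x \<in> H"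
  unfolding subgrp_def by blast

lemma subgrp_diff: "subgrp H \<Longrightarrow> x \<in> H \<Longrightarrow> y \<in> H \<Longrightarrow> x - y \<in> H"
  using subgrp_add[of H x "- y"] subgrp_uminus by fastforce

lemma mem_coset_iff: "x \<in> coset H g \<longleftrightarrow> x - g \<in> H"
  unfolding coset_def by (auto intro: exI[of _ "x - g"])

lemma coset_eq_iff:
  assumes "subgrp H"
  shows "coset H x = coset H y \<longleftrightarrow> x - y \<in> H"
proof
  assume "coset H x = coset H y"
  moreover have "x \<in> coset H x"
    using subgrp_zero[OF assms] by (simp add: mem_coset_iff)
  ultimately have "x \<in> coset H y"
    by simp
  then show "x - y \<in> H"
    by (simp add: mem_coset_iff)
next
  assume "x - y \<in> H"
  have "g - x \<in> H \<longleftrightarrow> g - y \<in> H" for g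
    using subgrp_add[OF assms, of "g - x" "x - y"] subgrp_diff[OF assms, of "g - y" "x - y"]
      \<open>x - y \<in> H\<close> by auto
  then show "coset H x = coset H y"
    by (auto simp: mem_coset_iff)
qed

lemma coset_disjoint:
  assumes "subgrp H" "coset H x \<noteq> coset H y"
  shows "coset H x \<inter> coset H y = {}"
proof (rule ccontr)
  assume "coset H x \<inter> coset H y \<noteq> {}"
  then obtain g where "g - x \<in> H" "g - y \<in> H"
    by (auto simp: mem_coset_iff)
  then have "x - y \<in> H"
    using subgrp_diff[OF assms(1), of "g - y" "g - x"] by simp
  then show False
    using assms by (simp add: coset_eq_iff)
qed

definition int_mult :: "int \<Rightarrow> 'a::ab_group_add \<Rightarrow> 'a" where
  "int_mult n z = (\<Sum>i<nat n. z) - (\<Sum>i<nat (- n). z)"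

lemma sum_const_lessThan_add:
  "(\<Sum>i<m + n. z) = (\<Sum>i<m. z) + (\<Sum>i<n. z :: 'a::ab_group_add)" for m n :: nat
  by (induction n) (simp_all add: ac_simps)

lemma int_mult_add: "int_mult (m + n) z = int_mult m z + int_mult n z"
proof -
  have "(\<Sum>i<nat (m + n). z) + ((\<Sum>i<nat (- m). z) + (\<Sum>i<nat (- n). z))
      = ((\<Sum>i<nat m. z) + (\<Sum>i<nat n. z)) + (\<Sum>i<nat (- (m + n)). z)"
    unfolding sum_const_lessThan_add[symmetric] by (rule arg_cong[where f = "\<lambda>k. \<Sum>i<k. z"]) arith
  then show ?thesis
    unfolding int_mult_def by (simp add: algebra_simps)
qed

lemma int_mult_0 [simp]: "int_mult 0 z = 0"
  and int_mult_1 [simp]: "int_mult 1 z = z"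
  unfolding int_mult_def by simp_all

lemma int_mult_diff: "int_mult (m - n) z = int_mult m z - int_mult n z"
  using int_mult_add[of "m - n" n z] by simp

lemma int_mult_uminus: "int_mult (- n) z = - int_mult n z"
  using int_mult_diff[of 0 n z] by simp

lemma int_mult_mem_subgrp:
  assumes "subgrp H" "infinite_order_mod H z" "int_mult n z \<in> H"
  shows "n = 0"
proof (rule ccontr)
  assume "n \<noteq> 0"
  then have "int_mult \<bar>n\<bar> z \<in> H"
    using assms(3) subgrp_uminus[OF assms(1)] int_mult_uminus[of n z] by (cases "0 < n") auto
  moreover have "int_mult \<bar>n\<bar> z = (\<Sum>i<nat \<bar>n\<bar>. z)"
    unfolding int_mult_def by simp
  ultimately show False
    using assms(2) \<open>n \<noteq> 0\<close> unfolding infinite_order_mod_def by simp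
qed

text \<open>The subgroup \<open>H + \<int> z\<close> generated by \<open>H\<close> and \<open>z\<close>; when \<open>z\<close> has infinite order modulo \<open>H\<close>
  it carries the homomorphism \<open>h + n z \<mapsto> n\<close> to \<open>\<int>\<close>.\<close>

definition adjoin :: "'a::ab_group_add set \<Rightarrow> 'a \<Rightarrow> 'a set" where
  "adjoin H z = {g. \<exists>n. g - int_mult n z \<in> H}"

definition adjoin_coord :: "'a::ab_group_add set \<Rightarrow> 'a \<Rightarrow> 'a \<Rightarrow> int" where
  "adjoin_coord H z g = (THE n. g - int_mult n z \<in> H)"

lemma adjoin_coord_eq:
  assumes "subgrp H" "infinite_order_mod H z" "g - int_mult n z \<in> H"
  shows "adjoin_coord H z g = n"
  unfolding adjoin_coord_def
proof (rule the_equality)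
  fix m assume "g - int_mult m z \<in> H"
  from subgrp_diff[OF assms(1) this assms(3)] have "int_mult (n - m) z \<in> H"
    by (simp add: int_mult_diff)
  from int_mult_mem_subgrp[OF assms(1,2) this] show "m = n"
    by simp
qed (fact assms(3))

lemma adjoin_coord_mem:
  assumes "subgrp H" "infinite_order_mod H z" "g \<in> adjoin H z"
  shows "g - int_mult (adjoin_coord H z g) z \<in> H"
  using assms adjoin_coord_eq unfolding adjoin_def by fastforce

lemma subgrp_adjoin:
  assumes "subgrp H"
  shows "subgrp (adjoin H z)"
  unfolding subgrp_def
proof (intro conjI ballI)
  show "0 \<in> adjoin H z"
    unfolding adjoin_def using subgrp_zero[OF assms] by (auto intro: exI[of _ 0])
next
  fix x y assume "x \<in> adjoin H z" "y \<in> adjoin H z"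
  then obtain m n where "x - int_mult m z \<in> H" "y - int_mult n z \<in> H"
    unfolding adjoin_def by blast
  then have "(x + y) - int_mult (m + n) z \<in> H"
    using subgrp_add[OF assms] by (fastforce simp: int_mult_add algebra_simps)
  then show "x + y \<in> adjoin H z"
    unfolding adjoin_def by blast
next
  fix x assume "x \<in> adjoin H z"
  then obtain n where "x - int_mult n z \<in> H"
    unfolding adjoin_def by blast
  then have "- x - int_mult (- n) z \<in> H"
    using subgrp_uminus[OF assms] by (fastforce simp: int_mult_uminus)
  then show "- x \<in> adjoin H z"
    unfolding adjoin_def by blast
qed

lemma subgrp_subset_adjoin: "H \<subseteq> adjoin H z"
  unfolding adjoin_def by (auto intro: exI[of _ 0])

lemma coset_subset_adjoin: "coset H z \<subseteq> adjoin H z"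
  unfolding adjoin_def by (auto simp: mem_coset_iff intro: exI[of _ 1])

lemma adjoin_coord_add:
  assumes "subgrp H" "infinite_order_mod H z" "x \<in> adjoin H z" "y \<in> adjoin H z"
  shows "adjoin_coord H z (x + y) = adjoin_coord H z x + adjoin_coord H z y"
proof (rule adjoin_coord_eq[OF assms(1,2)])
  show "x + y - int_mult (adjoin_coord H z x + adjoin_coord H z y) z \<in> H"
    using subgrp_add[OF assms(1)
        adjoin_coord_mem[OF assms(1,2,3)] adjoin_coord_mem[OF assms(1,2,4)]]
    by (simp add: int_mult_add algebra_simps)
qed

lemma adjoin_coord_subgrp: "subgrp H \<Longrightarrow> infinite_order_mod H z \<Longrightarrow> h \<in> H \<Longrightarrow> adjoin_coord H z h = 0"
  by (rule adjoin_coord_eq) auto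

lemma adjoin_coord_coset:
  "subgrp H \<Longrightarrow> infinite_order_mod H z \<Longrightarrow> g \<in> coset H z \<Longrightarrow> adjoin_coord H z g = 1"
  by (rule adjoin_coord_eq) (auto simp: mem_coset_iff)

section \<open>Lower bounds for the tripling\<close>

definition tripling_lower_bound :: "real \<Rightarrow> 'a::ab_group_add set \<Rightarrow> 'a set \<Rightarrow> bool" where
  "tripling_lower_bound c K W \<longleftrightarrow> (\<forall>A B. A \<subseteq> K \<longrightarrow> B \<subseteq> K \<longrightarrow> finite A \<longrightarrow> finite B \<longrightarrow>
     A \<noteq> {} \<longrightarrow> B \<noteq> {} \<longrightarrow> c * sqrt (real (card A) * real (card B)) \<le> real (card (sumset (sumset A B) W)))"

lemma tripling_lower_boundI:
  assumes "\<And>A B. A \<subseteq> K \<Longrightarrow> B \<subseteq> K \<Longrightarrow> finite A \<Longrightarrow> finite B \<Longrightarrow> A \<noteq> {} \<Longrightarrow> B \<noteq> {} \<Longrightarrow>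
    c * sqrt (real (card A) * real (card B)) \<le> real (card (sumset (sumset A B) W))"
  shows "tripling_lower_bound c K W"
  using assms unfolding tripling_lower_bound_def by blast

lemma tripling_lower_boundD:
  assumes "tripling_lower_bound c K W" "A \<subseteq> K" "B \<subseteq> K" "finite A" "finite B" "A \<noteq> {}" "B \<noteq> {}"
  shows "c * sqrt (real (card A) * real (card B)) \<le> real (card (sumset (sumset A B) W))"
  using assms unfolding tripling_lower_bound_def by blast

lemma tripling_lower_bound_singleton: "tripling_lower_bound 1 UNIV {x}"
proof (rule tripling_lower_boundI)
  fix A B :: "'a set" assume "finite A" "finite B" "A \<noteq> {}" "B \<noteq> {}"
  then have "card A \<le> card (sumset A B)" "card B \<le> card (sumset A B)"
    using card_le_card_sumset[of A B] card_le_card_sumset[of B A] by (auto simp: sumset_commute)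
  then have "sqrt (real (card A) * real (card B)) \<le> sqrt (real (card (sumset A B)) ^ 2)"
    unfolding power2_eq_square by (intro real_sqrt_le_mono mult_mono) auto
  then show "1 * sqrt (real (card A) * real (card B)) \<le> real (card (sumset (sumset A B) {x}))"
    by (simp add: sumset_singleton card_translate)
qed

lemma tripling_lower_bound_translate_iff:
  "tripling_lower_bound c K ((\<lambda>x. x + t) ` W) \<longleftrightarrow> tripling_lower_bound c K W"
  unfolding tripling_lower_bound_def card_sumset_translate_right ..

lemma tripling_lower_bound_coset:
  assumes "subgrp K" "tripling_lower_bound c K W" "A \<subseteq> coset K a" "B \<subseteq> coset K b"
    and "finite A" "finite B" "A \<noteq> {}" "B \<noteq> {}"
  shows "c * sqrt (real (card A) * real (card B)) \<le> real (card (sumset (sumset A B) W))"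
proof -
  have "c * sqrt (real (card ((\<lambda>x. x + - a) ` A)) * real (card ((\<lambda>x. x + - b) ` B)))
      \<le> real (card (sumset (sumset ((\<lambda>x. x + - a) ` A) ((\<lambda>x. x + - b) ` B)) W))"
    using assms(3-8) by (intro tripling_lower_boundD[OF assms(2)]) (auto simp: mem_coset_iff)
  then show ?thesis
    by (simp only: card_translate card_sumset_sumset_translate)
qed

lemma mem_coset_iff_coset_eq: "subgrp K \<Longrightarrow> x \<in> coset K g \<longleftrightarrow> coset K x = coset K g"
  by (simp add: mem_coset_iff coset_eq_iff)

lemma card_eq_sum_card_cosets:
  assumes "subgrp K" "finite B"
  shows "real (card B) = (\<Sum>C\<in>coset K ` B. real (card (B \<inter> C)))"
  unfolding card_eq_sum_card_fibres[OF assms(2), of "coset K"]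
proof (rule sum.cong)
  fix C assume "C \<in> coset K ` B"
  then have "{x \<in> B. coset K x = C} = B \<inter> C"
    using mem_coset_iff_coset_eq[OF assms(1)] by auto
  then show "real (card {x \<in> B. coset K x = C}) = real (card (B \<inter> C))"
    by simp
qed simp

lemma sumset_sumset_cosets_disjoint:
  assumes "subgrp K" "W \<subseteq> K" "A \<subseteq> coset K a" "B\<^sub>1 \<subseteq> coset K b\<^sub>1" "B\<^sub>2 \<subseteq> coset K b\<^sub>2"
    and "coset K b\<^sub>1 \<noteq> coset K b\<^sub>2"
  shows "sumset (sumset A B\<^sub>1) W \<inter> sumset (sumset A B\<^sub>2) W = {}"
proof (rule ccontr)
  assume "sumset (sumset A B\<^sub>1) W \<inter> sumset (sumset A B\<^sub>2) W \<noteq> {}"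
  then obtain g where "g \<in> sumset (sumset A B\<^sub>1) W" "g \<in> sumset (sumset A B\<^sub>2) W"
    by blast
  then obtain x\<^sub>1 y\<^sub>1 w\<^sub>1 x\<^sub>2 y\<^sub>2 w\<^sub>2
    where "x\<^sub>1 \<in> A" "y\<^sub>1 \<in> B\<^sub>1" "w\<^sub>1 \<in> W" "x\<^sub>2 \<in> A" "y\<^sub>2 \<in> B\<^sub>2" "w\<^sub>2 \<in> W"
    and "g = x\<^sub>1 + y\<^sub>1 + w\<^sub>1" "g = x\<^sub>2 + y\<^sub>2 + w\<^sub>2"
    unfolding sumset_sumset_iff by blast
  then have eq: "x\<^sub>1 + y\<^sub>1 + w\<^sub>1 = x\<^sub>2 + y\<^sub>2 + w\<^sub>2"
    by simp
  have "x\<^sub>1 - a \<in> K" "x\<^sub>2 - a \<in> K"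
    using \<open>x\<^sub>1 \<in> A\<close> \<open>x\<^sub>2 \<in> A\<close> assms(3) by (auto simp: mem_coset_iff)
  then have "(x\<^sub>2 - a) - (x\<^sub>1 - a) \<in> K"
    by (rule subgrp_diff[OF assms(1), rotated])
  moreover have "w\<^sub>2 - w\<^sub>1 \<in> K"
    using \<open>w\<^sub>1 \<in> W\<close> \<open>w\<^sub>2 \<in> W\<close> assms(2) subgrp_diff[OF assms(1)] by auto
  ultimately have "((x\<^sub>2 - a) - (x\<^sub>1 - a)) + (w\<^sub>2 - w\<^sub>1) \<in> K"
    by (rule subgrp_add[OF assms(1)])
  moreover have "((x\<^sub>2 - a) - (x\<^sub>1 - a)) + (w\<^sub>2 - w\<^sub>1) = y\<^sub>1 - y\<^sub>2"
    using eq by (simp add: algebra_simps)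
  ultimately have "coset K y\<^sub>1 = coset K y\<^sub>2"
    using coset_eq_iff[OF assms(1)] by simp
  moreover have "coset K y\<^sub>1 = coset K b\<^sub>1" "coset K y\<^sub>2 = coset K b\<^sub>2"
    using \<open>y\<^sub>1 \<in> B\<^sub>1\<close> \<open>y\<^sub>2 \<in> B\<^sub>2\<close> assms(4,5) mem_coset_iff_coset_eq[OF assms(1)] by blast+
  ultimately show False
    using assms(6) by simp
qed

lemma sum_card_sumset_cosets_le:
  assumes "subgrp K" "W \<subseteq> K" "finite A" "finite B" "finite W" "A' \<subseteq> A" "A' \<subseteq> coset K a"
  shows "(\<Sum>C\<in>coset K ` B. real (card (sumset (sumset A' (B \<inter> C)) W)))
    \<le> real (card (sumset (sumset A B) W))"
proof -
  let ?T = "\<lambda>C. sumset (sumset A' (B \<inter> C)) W"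
  have "finite A'"
    using assms(3,6) finite_subset by blast
  moreover have "?T C\<^sub>1 \<inter> ?T C\<^sub>2 = {}"
    if C: "C\<^sub>1 \<in> coset K ` B" "C\<^sub>2 \<in> coset K ` B" "C\<^sub>1 \<noteq> C\<^sub>2" for C\<^sub>1 C\<^sub>2
  proof -
    obtain b\<^sub>1 b\<^sub>2 where "C\<^sub>1 = coset K b\<^sub>1" "C\<^sub>2 = coset K b\<^sub>2"
      using C(1,2) by blast
    then show ?thesis
      using C(3) by (intro sumset_sumset_cosets_disjoint[OF assms(1,2,7)]) auto
  qed
  ultimately have "card (\<Union>C\<in>coset K ` B. ?T C) = (\<Sum>C\<in>coset K ` B. card (?T C))"
    using assms(4,5) by (intro card_UN_disjoint) auto
  then have "(\<Sum>C\<in>coset K ` B. real (card (?T C))) = real (card (\<Union>C\<in>coset K ` B. ?T C))"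
    by simp
  also have "\<dots> \<le> real (card (sumset (sumset A B) W))"
  proof (intro of_nat_mono card_mono UN_least)
    show "finite (sumset (sumset A B) W)"
      using assms(3-5) by simp
    show "?T C \<subseteq> sumset (sumset A B) W" for C
      using assms(6) by (intro sumset_mono) auto
  qed
  finally show ?thesis .
qed

lemma tripling_lower_bound_subgrp_half:
  assumes "subgrp K" "W \<subseteq> K" "0 \<le> c" "tripling_lower_bound c K W"
    and "finite A" "finite B" "finite W" "a \<in> A"
    and "0 < m" "\<forall>b\<in>B. real (card (B \<inter> coset K b)) \<le> m"
  shows "c * sqrt (real (card (A \<inter> coset K a))) * real (card B) / sqrt m
    \<le> real (card (sumset (sumset A B) W))"
proof -
  let ?A' = "A \<inter> coset K a"
  have "a \<in> ?A'"
    using assms(8) subgrp_zero[OF assms(1)] by (simp add: mem_coset_iff)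
  have "c * sqrt (real (card ?A')) * real (card B) / sqrt m
      = (\<Sum>C\<in>coset K ` B. c * sqrt (real (card ?A')) * (real (card (B \<inter> C)) / sqrt m))"
    unfolding card_eq_sum_card_cosets[OF assms(1,6)] by (simp add: sum_distrib_left sum_divide_distrib)
  also have "\<dots> \<le> (\<Sum>C\<in>coset K ` B. real (card (sumset (sumset ?A' (B \<inter> C)) W)))"
  proof (rule sum_mono)
    fix C assume "C \<in> coset K ` B"
    then obtain b where "b \<in> B" "C = coset K b"
      by blast
    then have "b \<in> B \<inter> C"
      using subgrp_zero[OF assms(1)] by (simp add: mem_coset_iff)
    have "real (card (B \<inter> C)) \<le> m"
      using assms(10) \<open>b \<in> B\<close> \<open>C = coset K b\<close> by simp
    then have "sqrt (real (card (B \<inter> C))) * sqrt (real (card (B \<inter> C)))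
        \<le> sqrt (real (card (B \<inter> C))) * sqrt m"
      by (intro mult_left_mono) auto
    then have "real (card (B \<inter> C)) \<le> sqrt (real (card (B \<inter> C))) * sqrt m"
      by simp
    then have "real (card (B \<inter> C)) / sqrt m \<le> sqrt (real (card (B \<inter> C)))"
      using assms(9) by (simp add: divide_le_eq)
    then have "c * sqrt (real (card ?A')) * (real (card (B \<inter> C)) / sqrt m)
        \<le> c * sqrt (real (card ?A')) * sqrt (real (card (B \<inter> C)))"
      using assms(3) by (intro mult_left_mono) auto
    also have "\<dots> = c * sqrt (real (card ?A') * real (card (B \<inter> C)))"
      by (simp add: real_sqrt_mult)
    also have "\<dots> \<le> real (card (sumset (sumset ?A' (B \<inter> C)) W))"
      using \<open>a \<in> ?A'\<close> \<open>b \<in> B \<inter> C\<close> \<open>C = coset K b\<close> assms(5,6)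
      by (intro tripling_lower_bound_coset[OF assms(1,4)]) auto
    finally show "c * sqrt (real (card ?A')) * (real (card (B \<inter> C)) / sqrt m)
        \<le> real (card (sumset (sumset ?A' (B \<inter> C)) W))" .
  qed
  also have "\<dots> \<le> real (card (sumset (sumset A B) W))"
    using assms(1,2,5-7) by (intro sum_card_sumset_cosets_le) auto
  finally show ?thesis .
qed

text \<open>Splitting \<open>A\<close> and \<open>B\<close> along the cosets of \<open>K\<close>: the previous lemma for the largest
  pieces of \<open>A\<close> and of \<open>B\<close>, combined by the geometric mean.\<close>

lemma tripling_lower_bound_subgrp:
  assumes "subgrp K" "W \<subseteq> K" "finite W" "0 \<le> c" "tripling_lower_bound c K W"
  shows "tripling_lower_bound c UNIV W"
proof (rule tripling_lower_boundI)
  fix A B :: "'a set" assume AB: "finite A" "finite B" "A \<noteq> {}" "B \<noteq> {}"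
  obtain a where "a \<in> A" and a_eq: "Max ((\<lambda>a. card (A \<inter> coset K a)) ` A) = card (A \<inter> coset K a)"
    by (rule obtains_MAX[OF AB(1,3)])
  then have a_max: "\<forall>a'\<in>A. card (A \<inter> coset K a') \<le> card (A \<inter> coset K a)"
    using AB(1) by (auto simp flip: a_eq)
  obtain b where "b \<in> B" and b_eq: "Max ((\<lambda>b. card (B \<inter> coset K b)) ` B) = card (B \<inter> coset K b)"
    by (rule obtains_MAX[OF AB(2,4)])
  then have b_max: "\<forall>b'\<in>B. card (B \<inter> coset K b') \<le> card (B \<inter> coset K b)"
    using AB(2) by (auto simp flip: b_eq)
  define x where "x = real (card (A \<inter> coset K a))"
  define y where "y = real (card (B \<inter> coset K b))"
  have "a \<in> A \<inter> coset K a" "b \<in> B \<inter> coset K b"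
    using \<open>a \<in> A\<close> \<open>b \<in> B\<close> subgrp_zero[OF assms(1)] by (simp_all add: mem_coset_iff)
  then have "0 < x" "0 < y"
    unfolding x_def y_def using AB(1,2) by (auto simp: card_gt_0_iff)
  let ?T = "real (card (sumset (sumset A B) W))"
  have "c * sqrt x * real (card B) / sqrt y \<le> ?T"
    unfolding x_def using b_max \<open>0 < y\<close> unfolding y_def
    by (intro tripling_lower_bound_subgrp_half[OF assms(1,2,4,5) AB(1,2) assms(3) \<open>a \<in> A\<close>]) auto
  moreover have "c * sqrt y * real (card A) / sqrt x \<le> real (card (sumset (sumset B A) W))"
    unfolding y_def using a_max \<open>0 < x\<close> unfolding x_def
    by (intro tripling_lower_bound_subgrp_half[OF assms(1,2,4,5) AB(2,1) assms(3) \<open>b \<in> B\<close>]) auto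
  then have "c * sqrt y * real (card A) / sqrt x \<le> ?T"
    by (simp only: sumset_commute[of B A])
  ultimately have
    "sqrt ((c * sqrt x * real (card B) / sqrt y) * (c * sqrt y * real (card A) / sqrt x)) \<le> ?T"
    using \<open>0 < x\<close> \<open>0 < y\<close> assms(4) by (intro sqrt_mult_le_of_le) auto
  moreover have "(c * sqrt x * real (card B) / sqrt y) * (c * sqrt y * real (card A) / sqrt x)
      = c\<^sup>2 * (real (card A) * real (card B))"
    using \<open>0 < x\<close> \<open>0 < y\<close> by (simp add: field_simps power2_eq_square)
  ultimately show "c * sqrt (real (card A) * real (card B)) \<le> ?T"
    using assms(4) by (simp add: real_sqrt_mult)
qed

section \<open>Tripling of quasicubes\<close>

lemma sumset_fibre_subset:
  fixes \<phi> :: "'a::ab_group_add \<Rightarrow> int"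
  assumes "subgrp K" "\<forall>x\<in>K. \<forall>y\<in>K. \<phi> (x + y) = \<phi> x + \<phi> y"
    and "A \<subseteq> K" "B \<subseteq> K" "W \<subseteq> K" "\<forall>w\<in>W. \<phi> w = e"
  shows "sumset (sumset {x\<in>A. \<phi> x = i} {y\<in>B. \<phi> y = j}) W
    \<subseteq> {g \<in> sumset (sumset A B) W. \<phi> g = i + j + e}"
proof
  fix g assume "g \<in> sumset (sumset {x\<in>A. \<phi> x = i} {y\<in>B. \<phi> y = j}) W"
  then obtain x y w where "x \<in> A" "\<phi> x = i" "y \<in> B" "\<phi> y = j" "w \<in> W" "g = x + y + w"
    unfolding sumset_sumset_iff by blast
  moreover have "x + y \<in> K" "x \<in> K" "y \<in> K" "w \<in> K"
    using \<open>x \<in> A\<close> \<open>y \<in> B\<close> \<open>w \<in> W\<close> assms(3-5) subgrp_add[OF assms(1)] by blast+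
  ultimately have "\<phi> g = i + j + e"
    using assms(2,6) by simp
  then show "g \<in> {g \<in> sumset (sumset A B) W. \<phi> g = i + j + e}"
    using \<open>x \<in> A\<close> \<open>y \<in> B\<close> \<open>w \<in> W\<close> \<open>g = x + y + w\<close> unfolding sumset_sumset_iff by blast
qed

lemma tripling_lower_bound_fibres:
  fixes \<phi> :: "'a::ab_group_add \<Rightarrow> int"
  assumes "subgrp K" "\<forall>x\<in>K. \<forall>y\<in>K. \<phi> (x + y) = \<phi> x + \<phi> y"
    and "A \<subseteq> K" "B \<subseteq> K" "finite A" "finite B" "finite W'"
    and "W \<subseteq> W'" "W \<subseteq> K" "\<forall>w\<in>W. \<phi> w = e" "tripling_lower_bound c UNIV W"
    and "i \<in> \<phi> ` A" "j \<in> \<phi> ` B"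
  shows "c * sqrt (real (card {x\<in>A. \<phi> x = i}) * real (card {y\<in>B. \<phi> y = j}))
    \<le> real (card {g \<in> sumset (sumset A B) W'. \<phi> g = i + j + e})"
proof -
  have "c * sqrt (real (card {x\<in>A. \<phi> x = i}) * real (card {y\<in>B. \<phi> y = j}))
      \<le> real (card (sumset (sumset {x\<in>A. \<phi> x = i} {y\<in>B. \<phi> y = j}) W))"
    using assms(5,6,11-13) by (intro tripling_lower_boundD) auto
  also have "\<dots> \<le> real (card {g \<in> sumset (sumset A B) W'. \<phi> g = i + j + e})"
  proof (intro of_nat_mono card_mono)
    show "finite {g \<in> sumset (sumset A B) W'. \<phi> g = i + j + e}"
      using assms(5-7) by simp
    show "sumset (sumset {x\<in>A. \<phi> x = i} {y\<in>B. \<phi> y = j}) W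
        \<subseteq> {g \<in> sumset (sumset A B) W'. \<phi> g = i + j + e}"
      using sumset_fibre_subset[OF assms(1-4,9,10)] sumset_mono[OF order_refl assms(8)] by blast
  qed
  finally show ?thesis .
qed

lemma tripling_lower_bound_adjoin:
  assumes "subgrp H" "infinite_order_mod H z"
    and "W\<^sub>0 \<subseteq> H" "finite W\<^sub>0" "W\<^sub>0 \<noteq> {}" "tripling_lower_bound (card W\<^sub>0) UNIV W\<^sub>0"
    and "W\<^sub>1 \<subseteq> coset H z" "finite W\<^sub>1" "W\<^sub>1 \<noteq> {}" "tripling_lower_bound (card W\<^sub>1) UNIV W\<^sub>1"
  shows "tripling_lower_bound (card W\<^sub>0 + card W\<^sub>1) (adjoin H z) (W\<^sub>0 \<union> W\<^sub>1)"
proof (rule tripling_lower_boundI)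
  fix A B assume AB: "A \<subseteq> adjoin H z" "B \<subseteq> adjoin H z" "finite A" "finite B" "A \<noteq> {}" "B \<noteq> {}"
  let ?\<phi> = "adjoin_coord H z"
  let ?S = "sumset (sumset A B) (W\<^sub>0 \<union> W\<^sub>1)"
  define a where "a = (\<lambda>i. real (card {x\<in>A. ?\<phi> x = i}))"
  define b where "b = (\<lambda>j. real (card {y\<in>B. ?\<phi> y = j}))"
  define s where "s = (\<lambda>n. real (card {g\<in>?S. ?\<phi> g = n}))"
  have "finite ?S"
    using AB(3,4) assms(4,8) by simp
  have additive: "\<forall>x\<in>adjoin H z. \<forall>y\<in>adjoin H z. ?\<phi> (x + y) = ?\<phi> x + ?\<phi> y"
    using adjoin_coord_add[OF assms(1,2)] by blast
  have W_adjoin: "W\<^sub>0 \<subseteq> adjoin H z" "W\<^sub>1 \<subseteq> adjoin H z"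
    using assms(3,7) subgrp_subset_adjoin coset_subset_adjoin by blast+
  note fibre_bound = tripling_lower_bound_fibres[OF subgrp_adjoin[OF assms(1)] additive AB(1-4),
      of "W\<^sub>0 \<union> W\<^sub>1"]
  have "\<forall>w\<in>W\<^sub>0. ?\<phi> w = 0" "\<forall>w\<in>W\<^sub>1. ?\<phi> w = 1"
    using adjoin_coord_subgrp[OF assms(1,2)] adjoin_coord_coset[OF assms(1,2)] assms(3,7) by blast+
  have "(real (card W\<^sub>0) + real (card W\<^sub>1)) * sqrt (sum a (?\<phi> ` A) * sum b (?\<phi> ` B)) \<le> sum s (?\<phi> ` ?S)"
  proof (rule weighted_sqrt_sum_mult_sum_le)
    show "\<forall>i\<in>?\<phi> ` A. 0 < a i" "\<forall>j\<in>?\<phi> ` B. 0 < b j"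
      unfolding a_def b_def using AB(3,4) by (auto simp: card_gt_0_iff)
    show "\<forall>n. 0 \<le> s n"
      unfolding s_def by simp
    show "\<forall>n. n \<notin> ?\<phi> ` ?S \<longrightarrow> s n = 0"
    proof (intro allI impI)
      fix n assume "n \<notin> ?\<phi> ` ?S"
      then have "{g\<in>?S. ?\<phi> g = n} = {}"
        by blast
      then show "s n = 0"
        unfolding s_def by (simp only: card.empty of_nat_0)
    qed
    show "0 < real (card W\<^sub>0)" "0 < real (card W\<^sub>1)"
      using assms(4,5,8,9) by (simp_all add: card_gt_0_iff)
    show "\<forall>i\<in>?\<phi> ` A. \<forall>j\<in>?\<phi> ` B. real (card W\<^sub>0) * sqrt (a i * b j) \<le> s (i + j)"
      unfolding a_def b_def s_def
      using fibre_bound[OF _ Un_upper1 W_adjoin(1) \<open>\<forall>w\<in>W\<^sub>0. ?\<phi> w = 0\<close> assms(6)] assms(4,8) by simp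
    show "\<forall>i\<in>?\<phi> ` A. \<forall>j\<in>?\<phi> ` B. real (card W\<^sub>1) * sqrt (a i * b j) \<le> s (i + j + 1)"
      unfolding a_def b_def s_def
      using fibre_bound[OF _ Un_upper2 W_adjoin(2) \<open>\<forall>w\<in>W\<^sub>1. ?\<phi> w = 1\<close> assms(10)] assms(4,8) by simp
  qed (use AB \<open>finite ?S\<close> in auto)
  then show "real (card W\<^sub>0 + card W\<^sub>1) * sqrt (real (card A) * real (card B)) \<le> real (card ?S)"
    unfolding a_def b_def s_def card_eq_sum_card_fibres[OF AB(3), of ?\<phi>]
      card_eq_sum_card_fibres[OF AB(4), of ?\<phi>] card_eq_sum_card_fibres[OF \<open>finite ?S\<close>, of ?\<phi>]
    by simp
qed

lemma tripling_lower_bound_union_cosets: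
  assumes "subgrp H" "infinite_order_mod H z"
    and "W\<^sub>0 \<subseteq> H" "finite W\<^sub>0" "W\<^sub>0 \<noteq> {}" "tripling_lower_bound (card W\<^sub>0) UNIV W\<^sub>0"
    and "W\<^sub>1 \<subseteq> coset H z" "finite W\<^sub>1" "W\<^sub>1 \<noteq> {}" "tripling_lower_bound (card W\<^sub>1) UNIV W\<^sub>1"
  shows "tripling_lower_bound (card (W\<^sub>0 \<union> W\<^sub>1)) UNIV (W\<^sub>0 \<union> W\<^sub>1)"
proof -
  have "z \<notin> H"
    using spec[OF assms(2)[unfolded infinite_order_mod_def], of 1] by simp
  then have "W\<^sub>0 \<inter> W\<^sub>1 = {}"
    using assms(3,7) subgrp_diff[OF assms(1)] by (fastforce simp: mem_coset_iff)
  then have "card (W\<^sub>0 \<union> W\<^sub>1) = card W\<^sub>0 + card W\<^sub>1"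
    using assms(4,8) by (simp add: card_Un_disjoint)
  moreover have "W\<^sub>0 \<union> W\<^sub>1 \<subseteq> adjoin H z"
    using assms(3,7) subgrp_subset_adjoin coset_subset_adjoin by blast
  ultimately show ?thesis
    using tripling_lower_bound_adjoin[OF assms] assms(4,8)
    by (intro tripling_lower_bound_subgrp[OF subgrp_adjoin[OF assms(1)]]) auto
qed

lemma quasicube_card:
  assumes "quasicube d U"
  shows "finite U" "card U = 2 ^ d"
  using assms
proof (induction rule: quasicube.induct)
  case (qcSuc U H x y d)
  then have "card U = card (U \<inter> coset H x) + card (U \<inter> coset H y)"
    using coset_disjoint[of H x y]
    by (subst card_Un_disjoint[symmetric]) (auto intro: arg_cong[where f = card])
  with qcSuc show "finite U" "card U = 2 ^ Suc d"
    by simp_all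
qed simp_all

lemma quasicube_tripling_lower_bound:
  assumes "quasicube d U" "V \<subseteq> U"
  shows "tripling_lower_bound (card V) UNIV V"
  using assms
proof (induction arbitrary: V rule: quasicube.induct)
  case (qc0 x)
  then consider "V = {}" | "V = {x}"
    by blast
  then show ?case
  proof cases
    case 1
    then show ?thesis
      unfolding tripling_lower_bound_def by simp
  next
    case 2
    then show ?thesis
      using tripling_lower_bound_singleton by simp
  qed
next
  case (qcSuc U H x y d)
  define V\<^sub>x where "V\<^sub>x = V \<inter> coset H x"
  define V\<^sub>y where "V\<^sub>y = V \<inter> coset H y"
  have "V = V\<^sub>x \<union> V\<^sub>y"
    using qcSuc.prems qcSuc.hyps(5) unfolding V\<^sub>x_def V\<^sub>y_def by blast
  have IH: "tripling_lower_bound (card V\<^sub>x) UNIV V\<^sub>x" "tripling_lower_bound (card V\<^sub>y) UNIV V\<^sub>y"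
    using qcSuc.IH qcSuc.prems unfolding V\<^sub>x_def V\<^sub>y_def by (meson inf_mono order_refl)+
  show ?case
  proof (cases "V\<^sub>x = {} \<or> V\<^sub>y = {}")
    case True
    then show ?thesis
      using IH \<open>V = V\<^sub>x \<union> V\<^sub>y\<close> by auto
  next
    case False
    let ?\<tau> = "\<lambda>v. v + - y"
    have "finite V"
      using qcSuc.hyps(1) qcSuc.prems finite_subset by blast
    have "tripling_lower_bound (card (?\<tau> ` V\<^sub>y \<union> ?\<tau> ` V\<^sub>x)) UNIV (?\<tau> ` V\<^sub>y \<union> ?\<tau> ` V\<^sub>x)"
    proof (rule tripling_lower_bound_union_cosets[OF qcSuc.hyps(2,8)])
      show "?\<tau> ` V\<^sub>y \<subseteq> H" "?\<tau> ` V\<^sub>x \<subseteq> coset H (x - y)"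
        unfolding V\<^sub>x_def V\<^sub>y_def by (auto simp: mem_coset_iff)
      show "finite (?\<tau> ` V\<^sub>y)" "finite (?\<tau> ` V\<^sub>x)" "?\<tau> ` V\<^sub>y \<noteq> {}" "?\<tau> ` V\<^sub>x \<noteq> {}"
        using \<open>finite V\<close> False unfolding V\<^sub>x_def V\<^sub>y_def by auto
      show "tripling_lower_bound (card (?\<tau> ` V\<^sub>y)) UNIV (?\<tau> ` V\<^sub>y)"
        "tripling_lower_bound (card (?\<tau> ` V\<^sub>x)) UNIV (?\<tau> ` V\<^sub>x)"
        using IH by (simp_all only: card_translate tripling_lower_bound_translate_iff)
    qed
    then show ?thesis
      unfolding \<open>V = V\<^sub>x \<union> V\<^sub>y\<close> image_Un[symmetric] card_translate tripling_lower_bound_translate_iff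
      by (simp add: Un_commute)
  qed
qed

section \<open>Petridis' lemma and the induced doubling\<close>

lemma card_sumset_insert:
  assumes "finite X" "finite C"
  shows "card (sumset X (insert c C)) + card {x\<in>X. x + c \<in> sumset X C} = card (sumset X C) + card X"
proof -
  have "sumset X (insert c C) = sumset X C \<union> (\<lambda>x. x + c) ` X"
    by (rule sumset_insert)
  moreover have "sumset X C \<inter> (\<lambda>x. x + c) ` X = (\<lambda>x. x + c) ` {x\<in>X. x + c \<in> sumset X C}"
    by blast
  ultimately show ?thesis
    using card_Un_Int[of "sumset X C" "(\<lambda>x. x + c) ` X"] assms by (simp add: card_translate)
qed

lemma card_sumset_sumset_insert_le:
  fixes X B C :: "'a::ab_group_add set" and c :: 'a
  assumes "finite X" "finite B" "finite C"
  defines "Z \<equiv> {x\<in>X. \<forall>b\<in>B. x + b + c \<in> sumset (sumset X B) C}"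
  shows "card (sumset (sumset X B) (insert c C)) + card (sumset Z B)
    \<le> card (sumset (sumset X B) C) + card (sumset X B)"
proof -
  let ?P = "sumset (sumset X B) C" and ?Q = "(\<lambda>g. g + c) ` sumset X B"
  have "sumset (sumset X B) (insert c C) = ?P \<union> ?Q"
    by (rule sumset_insert)
  moreover have "(\<lambda>g. g + c) ` sumset Z B \<subseteq> ?P \<inter> ?Q"
    unfolding Z_def sumset_def by force
  then have "card ((\<lambda>g. g + c) ` sumset Z B) \<le> card (?P \<inter> ?Q)"
    using assms(1-3) by (intro card_mono) auto
  then have "card (sumset Z B) \<le> card (?P \<inter> ?Q)"
    by (simp add: card_translate)
  ultimately show ?thesis
    using card_Un_Int[of ?P ?Q] assms(1-3) by (simp add: card_translate)
qed

lemma petridis: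
  fixes X B C :: "'a::ab_group_add set"
  assumes "finite X" "finite B" "finite C"
    and minimal: "\<And>Y. Y \<subseteq> X \<Longrightarrow> Y \<noteq> {} \<Longrightarrow>
      real (card (sumset X B)) * real (card Y) \<le> real (card (sumset Y B)) * real (card X)"
  shows "real (card (sumset (sumset X B) C)) * real (card X)
    \<le> real (card (sumset X B)) * real (card (sumset X C))"
  using assms(3)
proof (induction C rule: finite_induct)
  case empty
  then show ?case by simp
next
  case (insert c C)
  define Z where "Z = {x\<in>X. \<forall>b\<in>B. x + b + c \<in> sumset (sumset X B) C}"
  define W where "W = {x\<in>X. x + c \<in> sumset X C}"
  let ?x = "real (card X)" and ?t = "real (card (sumset X B))"
  have "W \<subseteq> Z"
  proof
    fix x assume "x \<in> W"
    then obtain x' c' where "x \<in> X" "x' \<in> X" "c' \<in> C" "x + c = x' + c'"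
      unfolding W_def sumset_iff by blast
    have "x + b + c \<in> sumset (sumset X B) C" if "b \<in> B" for b
    proof -
      have "(x' + b) + c' \<in> sumset (sumset X B) C"
        using \<open>x' \<in> X\<close> \<open>c' \<in> C\<close> that by (intro sumsetI)
      moreover have "x + b + c = (x' + b) + c'"
        using \<open>x + c = x' + c'\<close> by (simp add: algebra_simps)
      ultimately show ?thesis
        by (simp only:)
    qed
    with \<open>x \<in> X\<close> show "x \<in> Z"
      unfolding Z_def by blast
  qed
  then have "card W \<le> card Z"
    using assms(1) by (intro card_mono) (auto simp: Z_def)
  have "Z \<subseteq> X"
    unfolding Z_def by blast
  then have "?t * real (card Z) \<le> real (card (sumset Z B)) * ?x"
    using minimal[of Z] by (cases "Z = {}") auto
  have "real (card (sumset (sumset X B) (insert c C))) * ?x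
      \<le> (real (card (sumset (sumset X B) C)) + ?t - real (card (sumset Z B))) * ?x"
    using card_sumset_sumset_insert_le[OF assms(1,2) insert.hyps(1), of c] unfolding Z_def[symmetric]
    by (intro mult_right_mono) auto
  also have "\<dots> \<le> ?t * real (card (sumset X C)) + ?t * ?x - ?t * real (card Z)"
    using insert.IH \<open>?t * real (card Z) \<le> real (card (sumset Z B)) * ?x\<close> by (simp add: algebra_simps)
  also have "\<dots> \<le> ?t * (real (card (sumset X C)) + ?x - real (card W))"
    using mult_left_mono[of "real (card W)" "real (card Z)" ?t] \<open>card W \<le> card Z\<close>
    by (simp add: algebra_simps)
  also have "\<dots> = ?t * real (card (sumset X (insert c C)))"
    using card_sumset_insert[OF assms(1) insert.hyps(1), of c] unfolding W_def by simp
  finally show ?case .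
qed

lemma card_sumset_sq_lower_bound_arith:
  fixes v x a b t s :: real
  assumes "0 < x" "x \<le> a" "0 \<le> v" "0 \<le> b" "0 \<le> t" "0 \<le> s"
    and "v * sqrt (x * b) * x \<le> t * t" "t * a \<le> s * x"
  shows "v * a * sqrt (a * b) \<le> s\<^sup>2"
proof -
  have "(t * a) * (t * a) \<le> (s * x) * (s * x)"
    by (rule mult_mono[OF assms(8) assms(8)]) (use assms in auto)
  have "v * sqrt (x * b) * x * (a * a) \<le> (t * t) * (a * a)"
    using assms(7) by (intro mult_right_mono) auto
  also have "\<dots> \<le> (s * s) * (x * x)"
    using \<open>(t * a) * (t * a) \<le> (s * x) * (s * x)\<close> by (simp add: ac_simps)
  finally have "v * sqrt (x * b) * (a * a) \<le> (s * s) * x"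
    using assms(1) by (simp add: ac_simps)
  moreover have "v * a * sqrt (a * b) * x \<le> v * sqrt (x * b) * (a * a)"
  proof -
    have "sqrt x * (sqrt x * sqrt a) \<le> sqrt a * (sqrt x * sqrt a)"
      using assms(1,2) by (intro mult_right_mono) auto
    moreover have "sqrt x * (sqrt x * sqrt a) = (sqrt x * sqrt x) * sqrt a"
      "sqrt a * (sqrt x * sqrt a) = (sqrt a * sqrt a) * sqrt x"
      by (simp_all only: ac_simps)
    ultimately have "x * sqrt a \<le> a * sqrt x"
      using assms(1,2) by simp
    then have "v * a * sqrt b * (x * sqrt a) \<le> v * a * sqrt b * (a * sqrt x)"
      using assms by (intro mult_left_mono) auto
    then show ?thesis
      by (simp add: real_sqrt_mult ac_simps)
  qed
  ultimately have "v * a * sqrt (a * b) * x \<le> (s * s) * x"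
    by linarith
  then show ?thesis
    using assms(1) by (simp add: power2_eq_square)
qed

text \<open>Apply Petridis' lemma to a subset \<open>X \<subseteq> A\<close> of least doubling with \<open>B\<close>, and the tripling bound for
  \<open>V \<subseteq> B\<close> to \<open>X + B + V \<subseteq> X + B + B\<close>.\<close>

lemma card_sumset_sq_lower_bound:
  assumes "tripling_lower_bound (card V) UNIV V" "finite A" "finite B" "A \<noteq> {}" "V \<subseteq> B" "B \<noteq> {}"
  shows "real (card V) * real (card A) * sqrt (real (card A) * real (card B))
    \<le> real (card (sumset A B)) ^ 2"
proof -
  let ?ratio = "\<lambda>Y. real (card (sumset Y B)) / real (card Y)"
  have "finite {Y. Y \<subseteq> A \<and> Y \<noteq> {}}" "{Y. Y \<subseteq> A \<and> Y \<noteq> {}} \<noteq> {}"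
    using assms(2,4) by auto
  then obtain X where "is_arg_min ?ratio (\<lambda>Y. Y \<in> {Y. Y \<subseteq> A \<and> Y \<noteq> {}}) X"
    using ex_is_arg_min_if_finite by blast
  then have X: "X \<subseteq> A" "X \<noteq> {}" and X_min: "\<forall>Y. Y \<subseteq> A \<longrightarrow> Y \<noteq> {} \<longrightarrow> ?ratio X \<le> ?ratio Y"
    unfolding is_arg_min_def by (auto simp: not_less)
  have "finite X"
    using X(1) assms(2) finite_subset by blast
  then have "0 < real (card X)"
    using X(2) by (simp add: card_gt_0_iff)
  have ratio_le: "real (card (sumset X B)) * real (card Y) \<le> real (card (sumset Y B)) * real (card X)"
    if "Y \<subseteq> A" "Y \<noteq> {}" "finite Y" for Y
  proof -
    have "0 < real (card Y)"
      using that by (simp add: card_gt_0_iff)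
    have "?ratio X * (real (card X) * real (card Y)) \<le> ?ratio Y * (real (card X) * real (card Y))"
      using X_min that \<open>0 < real (card X)\<close> by (intro mult_right_mono) auto
    then show ?thesis
      using \<open>0 < real (card X)\<close> \<open>0 < real (card Y)\<close> by (simp add: field_simps)
  qed
  have "real (card V) * sqrt (real (card X) * real (card B)) \<le> real (card (sumset (sumset X B) V))"
    using tripling_lower_boundD[OF assms(1)] \<open>finite X\<close> X(2) assms(3,6) by blast
  also have "\<dots> \<le> real (card (sumset (sumset X B) B))"
    using assms(3,5) \<open>finite X\<close> by (intro of_nat_mono card_mono sumset_mono) auto
  finally have "real (card V) * sqrt (real (card X) * real (card B)) * real (card X)
      \<le> real (card (sumset (sumset X B) B)) * real (card X)"
    using \<open>0 < real (card X)\<close> by (intro mult_right_mono) auto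
  also have "\<dots> \<le> real (card (sumset X B)) * real (card (sumset X B))"
  proof (rule petridis[OF \<open>finite X\<close> assms(3,3)])
    fix Y assume "Y \<subseteq> X" "Y \<noteq> {}"
    moreover from this have "Y \<subseteq> A" "finite Y"
      using X(1) \<open>finite X\<close> finite_subset by blast+
    ultimately show "real (card (sumset X B)) * real (card Y) \<le> real (card (sumset Y B)) * real (card X)"
      using ratio_le by blast
  qed
  finally show ?thesis
    using \<open>0 < real (card X)\<close> X(1) assms(2) ratio_le[of A] assms(4)
    by (intro card_sumset_sq_lower_bound_arith) (auto simp: card_mono)
qed

lemma sqrt_card_le_doubling:
  assumes "tripling_lower_bound (card V) UNIV V" "finite A" "finite B" "A \<noteq> {}" "B \<noteq> {}"
    and "V \<subseteq> A" "V \<subseteq> B"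
  shows "sqrt (real (card V)) \<le> real (card (sumset A B)) / sqrt (real (card A) * real (card B))"
proof -
  define v where "v = real (card V)"
  define a where "a = real (card A)"
  define b where "b = real (card B)"
  define s where "s = real (card (sumset A B))"
  have "0 < a" "0 < b"
    unfolding a_def b_def using assms(2-5) by (simp_all add: card_gt_0_iff)
  have "v * a * sqrt (a * b) \<le> s\<^sup>2"
    unfolding v_def a_def b_def s_def using assms by (intro card_sumset_sq_lower_bound) auto
  moreover have "v * b * sqrt (a * b) \<le> s\<^sup>2"
    using card_sumset_sq_lower_bound[OF assms(1,3,2,5,6,4)]
    unfolding v_def a_def b_def s_def by (simp add: sumset_commute mult.commute)
  ultimately have "sqrt ((v * a * sqrt (a * b)) * (v * b * sqrt (a * b))) \<le> s\<^sup>2"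
    using \<open>0 < a\<close> \<open>0 < b\<close> by (intro sqrt_mult_le_of_le) (auto simp: v_def)
  moreover have "(v * a * sqrt (a * b)) * (v * b * sqrt (a * b)) = (v * (a * b))\<^sup>2"
    using \<open>0 < a\<close> \<open>0 < b\<close> by (simp add: power2_eq_square algebra_simps)
  ultimately have "v * (a * b) \<le> s\<^sup>2"
    using \<open>0 < a\<close> \<open>0 < b\<close> by (simp add: v_def)
  then have "sqrt (v * (a * b)) \<le> sqrt (s\<^sup>2)"
    by (rule real_sqrt_le_mono)
  then have "sqrt v * sqrt (a * b) \<le> s"
    by (simp add: real_sqrt_mult s_def)
  then show ?thesis
    using \<open>0 < a\<close> \<open>0 < b\<close> unfolding v_def a_def b_def s_def by (simp add: field_simps)
qed

lemma beta_eq_card: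
  assumes "tripling_lower_bound (card V) UNIV V"
  shows "beta V = real (card V)"
  unfolding beta_def
proof (rule cInf_eq_minimum)
  have "sumset (sumset {0} {0}) V = V"
    unfolding sumset_def by auto
  then show "real (card V) \<in>
      {real (card (sumset (sumset A B) V)) / sqrt (real (card A) * real (card B)) |A B.
        finite A \<and> finite B \<and> A \<noteq> {} \<and> B \<noteq> {}}"
    by (intro CollectI exI[of _ "{0}"]) simp
next
  fix r assume "r \<in> {real (card (sumset (sumset A B) V)) / sqrt (real (card A) * real (card B)) |A B.
      finite A \<and> finite B \<and> A \<noteq> {} \<and> B \<noteq> {}}"
  then obtain A B where AB: "finite A" "finite B" "A \<noteq> {}" "B \<noteq> {}"
    and r: "r = real (card (sumset (sumset A B) V)) / sqrt (real (card A) * real (card B))"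
    by blast
  have "0 < sqrt (real (card A) * real (card B))"
    using AB by (simp add: card_gt_0_iff)
  then show "real (card V) \<le> r"
    unfolding r using tripling_lower_boundD[OF assms _ _ AB] by (simp add: field_simps)
qed

lemma alpha_ge_sqrt_card:
  assumes "tripling_lower_bound (card V) UNIV V" "finite V"
  shows "sqrt (real (card V)) \<le> alpha V"
  unfolding alpha_def
proof (rule cInf_greatest)
  show "{real (card (sumset A B)) / sqrt (real (card A) * real (card B)) |A B.
      finite A \<and> finite B \<and> A \<noteq> {} \<and> B \<noteq> {} \<and> V \<subseteq> A \<and> V \<subseteq> B} \<noteq> {}"
    using assms(2) by (blast intro: exI[of _ "insert 0 V"])
next
  fix r assume "r \<in> {real (card (sumset A B)) / sqrt (real (card A) * real (card B)) |A B.
      finite A \<and> finite B \<and> A \<noteq> {} \<and> B \<noteq> {} \<and> V \<subseteq> A \<and> V \<subseteq> B}"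
  then show "sqrt (real (card V)) \<le> r"
    using sqrt_card_le_doubling[OF assms(1)] by blast
qed

theorem mainTheorem1:
  fixes U :: "'a::ab_group_add set" and d :: nat
  assumes "quasicube d U"
  shows "(\<forall>V. V \<subseteq> U \<longrightarrow> beta V = real (card V) \<and> alpha V \<ge> sqrt (real (card V)))
         \<and> beta U = 2 ^ d \<and> alpha U \<ge> 2 powr (real d / 2)"
proof -
  have subsets: "beta V = real (card V) \<and> alpha V \<ge> sqrt (real (card V))" if "V \<subseteq> U" for V
  proof -
    have "finite V"
      using quasicube_card(1)[OF assms] that finite_subset by blast
    then show ?thesis
      using quasicube_tripling_lower_bound[OF assms that] beta_eq_card alpha_ge_sqrt_card by blast
  qed
  have "sqrt (real (card U)) = 2 powr (real d / 2)"
    by (simp add: quasicube_card(2)[OF assms] powr_half_sqrt[symmetric] powr_realpow[symmetric]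
        powr_powr)
  then show ?thesis
    using subsets[of U] quasicube_card(2)[OF assms] subsets by auto
qed

end
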